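(* Let $R$ be a right semiartinian ring that is not completely reducible, and let $M$ be a finitely generated weakly $R$-projective right $R$-module. Then $M$ is projective.
   Context: All modules are right $R$-modules. For a right semiartinian ring $R$, the right socle sequence $(S_\alpha \mid \alpha \leq \sigma+1)$ is defined by $S_0 = 0$, $S_{\alpha+1}/S_\alpha = \mathrm{Soc}(R/S_\alpha)$, $S_\alpha = \bigcup_{\beta<\alpha} S_\beta$ for limit $\alpha$, with $\sigma+1$ the least ordinal such that $S_{\sigma+1} = R$ (the Loewy length); it is assumed that $\sigma > 0$ (i.e. $R$ is not completely reducible). For $\alpha \leq \sigma$, the $\alpha$th layer is $L_\alpha = S_{\alpha+1}/S_\alpha$ and the $\alpha$th layer epimorphism is the canonical projection $\pi_\alpha : S_{\alpha+1} \to L_\alpha$. A module $M$ is weakly $R$-projective if for each $0 < \alpha \leq \sigma$, each $f \in \mathrm{Hom}_R(M, L_\alpha)$ with finitely generated image factors through $\pi_\alpha$, i.e. $f = \pi_\alpha g$ for some $g \in \mathrm{Hom}_R(M, S_{\alpha+1})$. *)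

theory Defs
  imports "HOL-Algebra.Algebra"
begin

text \<open>A right R-module is represented by a record of type ('a,'b) module
  (carrier and additive structure of M); the field smult is read as the
  right action: x * r is written ract M x r = smult M r x.  The
  multiplicative fields mult/one of the record are ignored.\<close>

definition ract :: "('a, 'b) module \<Rightarrow> 'b \<Rightarrow> 'a \<Rightarrow> 'b" where
  "ract M x r = smult M r x"

definition right_module :: "'a ring \<Rightarrow> ('a, 'b) module \<Rightarrow> bool" where
  "right_module R M \<longleftrightarrow> ring R \<and> abelian_group M \<and>
     (\<forall>x\<in>carrier M. \<forall>r\<in>carrier R. ract M x r \<in> carrier M) \<and>
     (\<forall>x\<in>carrier M. \<forall>y\<in>carrier M. \<forall>r\<in>carrier R.
        ract M (x \<oplus>\<^bsub>M\<^esub> y) r = ract M x r \<oplus>\<^bsub>M\<^esub> ract M y r) \<and>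
     (\<forall>x\<in>carrier M. \<forall>r\<in>carrier R. \<forall>s\<in>carrier R.
        ract M x (r \<oplus>\<^bsub>R\<^esub> s) = ract M x r \<oplus>\<^bsub>M\<^esub> ract M x s) \<and>
     (\<forall>x\<in>carrier M. \<forall>r\<in>carrier R. \<forall>s\<in>carrier R.
        ract M x (r \<otimes>\<^bsub>R\<^esub> s) = ract M (ract M x r) s) \<and>
     (\<forall>x\<in>carrier M. ract M x \<one>\<^bsub>R\<^esub> = x)"

definition rsubmodule :: "'a ring \<Rightarrow> ('a, 'b) module \<Rightarrow> 'b set \<Rightarrow> bool" where
  "rsubmodule R M U \<longleftrightarrow> U \<subseteq> carrier M \<and> \<zero>\<^bsub>M\<^esub> \<in> U \<and>
     (\<forall>x\<in>U. \<forall>y\<in>U. x \<oplus>\<^bsub>M\<^esub> y \<in> U) \<and>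
     (\<forall>x\<in>U. \<ominus>\<^bsub>M\<^esub> x \<in> U) \<and>
     (\<forall>x\<in>U. \<forall>r\<in>carrier R. ract M x r \<in> U)"

definition rhom :: "'a ring \<Rightarrow> ('a, 'b) module \<Rightarrow> ('a, 'c) module \<Rightarrow> ('b \<Rightarrow> 'c) \<Rightarrow> bool" where
  "rhom R M N f \<longleftrightarrow> f \<in> carrier M \<rightarrow> carrier N \<and>
     (\<forall>x\<in>carrier M. \<forall>y\<in>carrier M. f (x \<oplus>\<^bsub>M\<^esub> y) = f x \<oplus>\<^bsub>N\<^esub> f y) \<and>
     (\<forall>x\<in>carrier M. \<forall>r\<in>carrier R. f (ract M x r) = ract N (f x) r)"

definition submod :: "('a, 'b) module \<Rightarrow> 'b set \<Rightarrow> ('a, 'b) module" where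
  "submod M U = M\<lparr>carrier := U\<rparr>"

definition quot_mod :: "('a, 'b) module \<Rightarrow> 'b set \<Rightarrow> ('a, 'b set) module" where
  "quot_mod M U =
     \<lparr>carrier = A_RCOSETS M U, monoid.mult = (\<lambda>A B. A), one = U, ring.zero = U,
      ring.add = set_add M,
      smult = (\<lambda>s A. set_add M ((\<lambda>x. ract M x s) ` A) U)\<rparr>"

definition fin_gen :: "'a ring \<Rightarrow> ('a, 'b) module \<Rightarrow> bool" where
  "fin_gen R M \<longleftrightarrow> (\<exists>A. finite A \<and> A \<subseteq> carrier M \<and>
     (\<forall>x\<in>carrier M. \<exists>c \<in> A \<rightarrow> carrier R. x = finsum M (\<lambda>a. ract M a (c a)) A))"

definition rsimple_sub :: "'a ring \<Rightarrow> ('a, 'b) module \<Rightarrow> 'b set \<Rightarrow> bool" where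
  "rsimple_sub R M U \<longleftrightarrow> rsubmodule R M U \<and> U \<noteq> {\<zero>\<^bsub>M\<^esub>} \<and>
     (\<forall>V. rsubmodule R M V \<and> V \<subseteq> U \<longrightarrow> V = {\<zero>\<^bsub>M\<^esub>} \<or> V = U)"

definition rsocle :: "'a ring \<Rightarrow> ('a, 'b) module \<Rightarrow> 'b set" where
  "rsocle R M = \<Inter>{V. rsubmodule R M V \<and> (\<forall>U. rsimple_sub R M U \<longrightarrow> U \<subseteq> V)}"

definition RR :: "'a ring \<Rightarrow> ('a, 'a) module" where
  "RR R = \<lparr>carrier = carrier R, monoid.mult = monoid.mult R, one = one R, ring.zero = ring.zero R,
           ring.add = ring.add R, smult = (\<lambda>r x. x \<otimes>\<^bsub>R\<^esub> r)\<rparr>"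

definition right_ideal :: "'a ring \<Rightarrow> 'a set \<Rightarrow> bool" where
  "right_ideal R I \<longleftrightarrow> rsubmodule R (RR R) I"

definition completely_reducible :: "'a ring \<Rightarrow> bool" where
  "completely_reducible R \<longleftrightarrow> rsocle R (RR R) = carrier R"

definition right_semiartinian :: "'a ring \<Rightarrow> bool" where
  "right_semiartinian R \<longleftrightarrow> ring R \<and>
     (\<forall>I. right_ideal R I \<and> I \<noteq> carrier R \<longrightarrow>
        rsocle R (quot_mod (RR R) I) \<noteq> {\<zero>\<^bsub>quot_mod (RR R) I\<^esub>})"

definition next_socle :: "'a ring \<Rightarrow> 'a set \<Rightarrow> 'a set" where
  "next_socle R I = {x \<in> carrier R. I +>\<^bsub>RR R\<^esub> x \<in> rsocle R (quot_mod (RR R) I)}"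

text \<open>The set of all members S_alpha of the right socle sequence: it is the
  least family containing S_0 = 0, closed under the successor step and under
  unions (limit steps).\<close>
inductive_set socle_seq :: "'a ring \<Rightarrow> 'a set set" for R :: "'a ring" where
  zero: "{\<zero>\<^bsub>R\<^esub>} \<in> socle_seq R"
| succ: "I \<in> socle_seq R \<Longrightarrow> next_socle R I \<in> socle_seq R"
| lim: "C \<noteq> {} \<Longrightarrow> \<forall>I\<in>C. I \<in> socle_seq R \<Longrightarrow> \<Union>C \<in> socle_seq R"

text \<open>The layer L_alpha = S_(alpha+1) / S_alpha for S_alpha = I.\<close>
definition layer :: "'a ring \<Rightarrow> 'a set \<Rightarrow> ('a, 'a set) module" where
  "layer R I = quot_mod (submod (RR R) (next_socle R I)) I"

text \<open>Weakly R-projective: for 0 < alpha \<le> sigma (i.e. S_alpha \<noteq> 0 and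
  S_alpha \<noteq> R), every f : M \<rightarrow> L_alpha with finitely generated image factors
  through pi_alpha : S_(alpha+1) \<rightarrow> L_alpha, pi_alpha(y) = S_alpha +> y.\<close>
definition weakly_projective :: "'a ring \<Rightarrow> ('a, 'b) module \<Rightarrow> bool" where
  "weakly_projective R M \<longleftrightarrow>
     (\<forall>I\<in>socle_seq R. I \<noteq> {\<zero>\<^bsub>R\<^esub>} \<longrightarrow> I \<noteq> carrier R \<longrightarrow>
        (\<forall>f. rhom R M (layer R I) f \<and> fin_gen R (submod (layer R I) (f ` carrier M)) \<longrightarrow>
           (\<exists>g. rhom R M (submod (RR R) (next_socle R I)) g \<and>
                (\<forall>x\<in>carrier M. f x = I +>\<^bsub>RR R\<^esub> g x))))"

text \<open>Projectivity relative to all right modules whose carriers live in the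
  types 'd and 'e; a theorem with free 'd, 'e quantifies over all of them,
  hence over all right modules up to isomorphism.\<close>
definition rprojective :: "'a ring \<Rightarrow> ('a, 'b) module \<Rightarrow> 'd itself \<Rightarrow> 'e itself \<Rightarrow> bool" where
  "rprojective R M _ _ \<longleftrightarrow>
     (\<forall>(N :: ('a, 'd) module) (N' :: ('a, 'e) module) p f.
        right_module R N \<and> right_module R N' \<and> rhom R N N' p \<and> p ` carrier N = carrier N' \<and>
        rhom R M N' f \<longrightarrow>
        (\<exists>g. rhom R M N g \<and> (\<forall>x\<in>carrier M. p (g x) = f x)))"

end

theory Submission
  imports Defs
begin

text \<open>
  Call a map \<open>\<phi> : M \<rightarrow> R\<close> linear modulo a right ideal \<open>I\<close> if \<open>x \<mapsto> I +> \<phi> x\<close> is a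
  homomorphism \<open>M \<rightarrow> R/I\<close>. By induction along the socle sequence, every such \<open>\<phi>\<close> with values
  in \<open>S + I\<close> lifts to a homomorphism \<open>M \<rightarrow> R\<close>. At a successor step \<open>S \<subseteq> S'\<close> the
  semisimplicity of \<open>S'/S\<close> gives a complement \<open>Y\<close> of \<open>S' \<inter> (S + I)\<close> modulo \<open>S\<close>; choosing
  values in \<open>Y\<close> splits \<open>\<phi>\<close> into a homomorphism into the layer \<open>S'/S\<close>, whose image is finitely
  generated and which therefore lifts by weak projectivity, and a remainder with values in
  \<open>S + I\<close>, which lifts by induction. At a limit step the values of \<open>\<phi>\<close> on finitely many
  generators of \<open>M\<close> already lie in a single \<open>S + I\<close>. Since \<open>R\<close> is semiartinian, \<open>R\<close> itself
  belongs to the socle sequence, so every homomorphism \<open>M \<rightarrow> R/I\<close> lifts. Adding the finitely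
  many generators one at a time, this produces a dual basis of \<open>M\<close>: the coefficient of a new
  generator \<open>b\<close> is linear modulo \<open>{r. b r \<in> span of the previous generators}\<close>. A module with a
  finite dual basis is projective.
\<close>

no_notation Sum_Type.Plus (infixr \<open><+>\<close> 65)

lemma RR_simps [simp]:
  "carrier (RR R) = carrier R" "ring.add (RR R) = ring.add R" "ring.zero (RR R) = ring.zero R"
  "ract (RR R) x r = x \<otimes>\<^bsub>R\<^esub> r"
  by (simp_all add: RR_def ract_def)

lemma a_inv_RR [simp]: "a_inv (RR R) = a_inv R"
  by (rule ext) (simp add: a_inv_def m_inv_def RR_def)

lemma a_minus_RR [simp]: "a_minus (RR R) = a_minus R"
  by (intro ext) (simp add: a_minus_def)

lemma submod_simps [simp]:
  "carrier (submod M U) = U" "ring.add (submod M U) = ring.add M"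
  "ring.zero (submod M U) = ring.zero M" "ract (submod M U) = ract M"
  by (simp_all add: submod_def ract_def[abs_def])

lemma a_r_coset_cong: "ring.add G = ring.add H \<Longrightarrow> a_r_coset G = a_r_coset H"
  by (intro ext) (simp add: a_r_coset_def r_coset_def)

lemma set_add_cong: "ring.add G = ring.add H \<Longrightarrow> set_add G = set_add H"
  by (intro ext) (simp add: set_add_def set_mult_def)

lemma a_r_coset_RR [simp]: "a_r_coset (RR R) = a_r_coset R"
  by (rule a_r_coset_cong) simp

lemma set_add_RR [simp]: "set_add (RR R) = set_add R"
  by (rule set_add_cong) simp

lemma a_r_coset_submod [simp]: "a_r_coset (submod M U) = a_r_coset M"
  by (rule a_r_coset_cong) simp

lemma set_add_submod [simp]: "set_add (submod M U) = set_add M"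
  by (rule set_add_cong) simp

lemma quot_mod_simps [simp]:
  "carrier (quot_mod M U) = a_r_coset M U ` carrier M"
  "ring.add (quot_mod M U) = set_add M" "ring.zero (quot_mod M U) = U"
  "ract (quot_mod M U) A r = set_add M ((\<lambda>x. ract M x r) ` A) U"
  by (auto simp: quot_mod_def ract_def A_RCOSETS_def RCOSETS_def a_r_coset_def)

lemma mem_set_add_iff: "z \<in> A <+>\<^bsub>G\<^esub> B \<longleftrightarrow> (\<exists>a\<in>A. \<exists>b\<in>B. z = a \<oplus>\<^bsub>G\<^esub> b)"
  by (auto simp: set_add_def')

lemma rhomD:
  assumes "rhom R M N f"
  shows "x \<in> carrier M \<Longrightarrow> f x \<in> carrier N"
    and "x \<in> carrier M \<Longrightarrow> y \<in> carrier M \<Longrightarrow> f (x \<oplus>\<^bsub>M\<^esub> y) = f x \<oplus>\<^bsub>N\<^esub> f y"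
    and "x \<in> carrier M \<Longrightarrow> r \<in> carrier R \<Longrightarrow> f (ract M x r) = ract N (f x) r"
  using assms unfolding rhom_def by auto

lemma rsubmoduleD:
  assumes "rsubmodule R M U"
  shows "U \<subseteq> carrier M" and "\<zero>\<^bsub>M\<^esub> \<in> U"
    and "x \<in> U \<Longrightarrow> y \<in> U \<Longrightarrow> x \<oplus>\<^bsub>M\<^esub> y \<in> U"
    and "x \<in> U \<Longrightarrow> \<ominus>\<^bsub>M\<^esub> x \<in> U"
    and "x \<in> U \<Longrightarrow> r \<in> carrier R \<Longrightarrow> ract M x r \<in> U"
  using assms by (simp_all add: rsubmodule_def)

text \<open>The definitions in Defs take plain ring records, whereas the locale \<open>ring\<close> admits record
  extensions.\<close>

locale ring_record = ring R for R :: "'a ring" (structure)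

locale rmodule = ring_record R for R :: "'a ring" (structure) +
  fixes M :: "('a, 'b) module"
  assumes rmod: "right_module R M"

sublocale rmodule \<subseteq> M: abelian_group M
  using rmod by (simp add: right_module_def)

lemma rmoduleI: "right_module R M \<Longrightarrow> rmodule R M"
  by (simp add: rmodule_def rmodule_axioms_def right_module_def ring_record_def)

context rmodule
begin

lemma ract_closed: "x \<in> carrier M \<Longrightarrow> r \<in> carrier R \<Longrightarrow> ract M x r \<in> carrier M"
  and ract_add_left: "x \<in> carrier M \<Longrightarrow> y \<in> carrier M \<Longrightarrow> r \<in> carrier R \<Longrightarrow>
    ract M (x \<oplus>\<^bsub>M\<^esub> y) r = ract M x r \<oplus>\<^bsub>M\<^esub> ract M y r"
  and ract_add_right: "x \<in> carrier M \<Longrightarrow> r \<in> carrier R \<Longrightarrow> s \<in> carrier R \<Longrightarrow>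
    ract M x (r \<oplus> s) = ract M x r \<oplus>\<^bsub>M\<^esub> ract M x s"
  and ract_mult: "x \<in> carrier M \<Longrightarrow> r \<in> carrier R \<Longrightarrow> s \<in> carrier R \<Longrightarrow>
    ract M x (r \<otimes> s) = ract M (ract M x r) s"
  and ract_one: "x \<in> carrier M \<Longrightarrow> ract M x \<one> = x"
  using rmod unfolding right_module_def by blast+

lemma ract_zero_right: "x \<in> carrier M \<Longrightarrow> ract M x \<zero> = \<zero>\<^bsub>M\<^esub>"
  using ract_add_right[of x \<zero> \<zero>] ract_closed[of x \<zero>] M.add.l_cancel_one by simp

lemma ract_zero_left: "r \<in> carrier R \<Longrightarrow> ract M \<zero>\<^bsub>M\<^esub> r = \<zero>\<^bsub>M\<^esub>"
  using ract_add_left[of "\<zero>\<^bsub>M\<^esub>" "\<zero>\<^bsub>M\<^esub>" r] ract_closed[of "\<zero>\<^bsub>M\<^esub>" r] M.add.l_cancel_one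
  by simp

lemma ract_neg_right:
  assumes "x \<in> carrier M" "r \<in> carrier R"
  shows "ract M x (\<ominus> r) = \<ominus>\<^bsub>M\<^esub> ract M x r"
proof -
  have "ract M x (\<ominus> r) \<oplus>\<^bsub>M\<^esub> ract M x r = \<zero>\<^bsub>M\<^esub>"
    using ract_add_right[of x "\<ominus> r" r] assms ract_zero_right by (simp add: l_neg)
  then show ?thesis using M.minus_equality ract_closed assms by simp
qed

lemma ract_neg_left:
  assumes "x \<in> carrier M" "r \<in> carrier R"
  shows "ract M (\<ominus>\<^bsub>M\<^esub> x) r = \<ominus>\<^bsub>M\<^esub> ract M x r"
proof -
  have "ract M (\<ominus>\<^bsub>M\<^esub> x) r \<oplus>\<^bsub>M\<^esub> ract M x r = \<zero>\<^bsub>M\<^esub>"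
    using ract_add_left[of "\<ominus>\<^bsub>M\<^esub> x" x r] assms ract_zero_left by (simp add: M.l_neg)
  then show ?thesis using M.minus_equality ract_closed assms by simp
qed

lemma ract_minus_right:
  "x \<in> carrier M \<Longrightarrow> r \<in> carrier R \<Longrightarrow> s \<in> carrier R \<Longrightarrow>
    ract M x (r \<ominus> s) = ract M x r \<ominus>\<^bsub>M\<^esub> ract M x s"
  by (simp add: minus_eq M.minus_eq ract_add_right ract_neg_right)

lemma ract_finsum:
  assumes "finite B" "g \<in> B \<rightarrow> carrier M" "r \<in> carrier R"
  shows "ract M (finsum M g B) r = finsum M (\<lambda>b. ract M (g b) r) B"
  using assms(1,2)
proof (induction B rule: finite_induct)
  case empty
  then show ?case using ract_zero_left[OF assms(3)] by simp
next
  case (insert b B)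
  then have g: "g \<in> B \<rightarrow> carrier M" "g b \<in> carrier M" by auto
  have "(\<lambda>b. ract M (g b) r) \<in> B \<rightarrow> carrier M" using g ract_closed assms(3) by auto
  then show ?case
    using insert g assms(3) by (simp add: ract_add_left ract_closed)
qed

lemma neg_eq_ract: "x \<in> carrier M \<Longrightarrow> \<ominus>\<^bsub>M\<^esub> x = ract M x (\<ominus> \<one>)"
  by (simp add: ract_neg_right ract_one)

lemma rsubmoduleI:
  assumes "U \<subseteq> carrier M" "\<zero>\<^bsub>M\<^esub> \<in> U" "\<And>x y. x \<in> U \<Longrightarrow> y \<in> U \<Longrightarrow> x \<oplus>\<^bsub>M\<^esub> y \<in> U"
    and "\<And>x r. x \<in> U \<Longrightarrow> r \<in> carrier R \<Longrightarrow> ract M x r \<in> U"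
  shows "rsubmodule R M U"
  unfolding rsubmodule_def using assms neg_eq_ract by auto

lemma rsubmodule_carrier: "rsubmodule R M (carrier M)"
  by (rule rsubmoduleI) (auto simp: ract_closed)

lemma rsubmodule_Inter:
  assumes "F \<noteq> {}" "\<And>V. V \<in> F \<Longrightarrow> rsubmodule R M V"
  shows "rsubmodule R M (\<Inter>F)"
  unfolding rsubmodule_def
proof (intro conjI ballI)
  show "\<Inter>F \<subseteq> carrier M" using assms rsubmoduleD(1) by blast
qed (use assms(2) in \<open>auto simp: rsubmodule_def\<close>)

lemma rsubmodule_abelian_subgroup: "rsubmodule R M U \<Longrightarrow> abelian_subgroup U M"
  unfolding rsubmodule_def
  by (intro abelian_subgroupI3 M.abelian_group_axioms additive_subgroupI M.add.subgroupI)
     (auto simp: a_inv_def)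

lemma right_module_submod:
  assumes U: "rsubmodule R M U"
  shows "right_module R (submod M U)"
proof -
  note UD = rsubmoduleD[OF U]
  have Uc: "\<And>x. x \<in> U \<Longrightarrow> x \<in> carrier M" using UD(1) by blast
  have "abelian_group (submod M U)"
  proof (rule abelian_groupI)
    fix x assume "x \<in> carrier (submod M U)"
    then show "\<exists>y\<in>carrier (submod M U). y \<oplus>\<^bsub>submod M U\<^esub> x = \<zero>\<^bsub>submod M U\<^esub>"
      using UD by (intro bexI[of _ "\<ominus>\<^bsub>M\<^esub> x"]) (auto simp: M.l_neg)
  qed (use UD Uc in \<open>auto simp: M.a_ac\<close>)
  then show ?thesis
    using UD(1,5) rmod unfolding right_module_def by (simp add: subset_iff)
qed

lemma rhom_zero:
  assumes "right_module R N" "rhom R M N f"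
  shows "f \<zero>\<^bsub>M\<^esub> = \<zero>\<^bsub>N\<^esub>"
proof -
  interpret N: rmodule R N by (rule rmoduleI[OF assms(1)])
  have "f \<zero>\<^bsub>M\<^esub> = f (ract M \<zero>\<^bsub>M\<^esub> \<zero>)" by (simp add: ract_zero_right)
  also have "\<dots> = ract N (f \<zero>\<^bsub>M\<^esub>) \<zero>" using rhomD(3)[OF assms(2)] by simp
  finally show ?thesis using N.ract_zero_right rhomD(1)[OF assms(2)] by simp
qed

lemma rsubmodule_image:
  assumes N: "right_module R N" and f: "rhom R M N f" and W: "rsubmodule R M W"
  shows "rsubmodule R N (f ` W)"
proof -
  interpret N: rmodule R N by (rule rmoduleI[OF N])
  note WD = rsubmoduleD[OF W]
  have Wc: "\<And>x. x \<in> W \<Longrightarrow> x \<in> carrier M" using WD(1) by blast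
  show ?thesis
  proof (rule N.rsubmoduleI)
    show "f ` W \<subseteq> carrier N" using Wc rhomD(1)[OF f] by blast
    show "\<zero>\<^bsub>N\<^esub> \<in> f ` W" using rhom_zero[OF N f] WD(2) by (metis imageI)
  next
    fix u v assume "u \<in> f ` W" "v \<in> f ` W"
    then show "u \<oplus>\<^bsub>N\<^esub> v \<in> f ` W"
      using WD(3) Wc by (auto simp flip: rhomD(2)[OF f])
  next
    fix u r assume "u \<in> f ` W" "r \<in> carrier R"
    then show "ract N u r \<in> f ` W"
      using WD(5) Wc by (auto simp flip: rhomD(3)[OF f])
  qed
qed

lemma rsubmodule_vimage:
  assumes N: "right_module R N" and f: "rhom R M N f" and V: "rsubmodule R N V"
  shows "rsubmodule R M {x \<in> carrier M. f x \<in> V}"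
proof (rule rsubmoduleI)
  show "\<zero>\<^bsub>M\<^esub> \<in> {x \<in> carrier M. f x \<in> V}"
    using rhom_zero[OF N f] rsubmoduleD(2)[OF V] by simp
qed (use rsubmoduleD(3,5)[OF V] rhomD[OF f] ract_closed in auto)

lemma rhom_finsum:
  assumes "right_module R N" "rhom R M N f" "finite B" "g \<in> B \<rightarrow> carrier M"
  shows "f (finsum M g B) = finsum N (\<lambda>b. f (g b)) B"
  using assms(3,4)
proof (induction B rule: finite_induct)
  case empty
  interpret N: rmodule R N by (rule rmoduleI[OF assms(1)])
  show ?case using rhom_zero[OF assms(1,2)] by simp
next
  case (insert b B)
  interpret N: rmodule R N by (rule rmoduleI[OF assms(1)])
  from insert.prems have "g \<in> B \<rightarrow> carrier M" "g b \<in> carrier M" by auto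
  moreover have "(\<lambda>b. f (g b)) \<in> B \<rightarrow> carrier N" using calculation rhomD(1)[OF assms(2)] by auto
  ultimately show ?case
    using insert rhomD[OF assms(2)] by simp
qed

lemma rhom_comp:
  "rhom R M N f \<Longrightarrow> rhom R N P g \<Longrightarrow> rhom R M P (\<lambda>x. g (f x))"
  unfolding rhom_def by (auto simp: Pi_iff)

lemma rhom_cong:
  assumes "rhom R M N f" "\<And>x. x \<in> carrier M \<Longrightarrow> f x = g x"
  shows "rhom R M N g"
proof -
  have "\<And>x. x \<in> carrier M \<Longrightarrow> g x = f x" using assms(2) by simp
  then show ?thesis using rhomD[OF assms(1)] unfolding rhom_def by (simp add: ract_closed)
qed

lemma rhom_add:
  assumes N: "right_module R N" and f: "rhom R M N f" and g: "rhom R M N g"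
  shows "rhom R M N (\<lambda>x. f x \<oplus>\<^bsub>N\<^esub> g x)"
proof -
  interpret N: rmodule R N by (rule rmoduleI[OF N])
  show ?thesis
    using rhomD[OF f] rhomD[OF g] unfolding rhom_def by (auto simp: N.M.a_ac N.ract_add_left ract_closed)
qed

lemma rhom_finsum_fun:
  assumes N: "right_module R N" and A: "finite A" and h: "\<And>a. a \<in> A \<Longrightarrow> rhom R M N (h a)"
  shows "rhom R M N (\<lambda>x. \<Oplus>\<^bsub>N\<^esub>a\<in>A. h a x)"
  using A h
proof (induction A rule: finite_induct)
  case empty
  interpret N: rmodule R N by (rule rmoduleI[OF N])
  show ?case unfolding rhom_def by (simp add: N.ract_zero_left)
next
  case (insert a A)
  interpret N: rmodule R N by (rule rmoduleI[OF N])
  note hc = rhomD(1)[OF insert.prems]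
  have "rhom R M N (h a)" "rhom R M N (\<lambda>x. \<Oplus>\<^bsub>N\<^esub>c\<in>A. h c x)"
    using insert.IH insert.prems by simp_all
  then have "rhom R M N (\<lambda>x. h a x \<oplus>\<^bsub>N\<^esub> (\<Oplus>\<^bsub>N\<^esub>c\<in>A. h c x))"
    by (rule rhom_add[OF N])
  moreover have "h a x \<oplus>\<^bsub>N\<^esub> (\<Oplus>\<^bsub>N\<^esub>c\<in>A. h c x) = (\<Oplus>\<^bsub>N\<^esub>c\<in>insert a A. h c x)"
    if "x \<in> carrier M" for x
    using hc that by (intro N.M.finsum_insert[OF insert.hyps, symmetric]) auto
  ultimately show ?case by (rule rhom_cong)
qed

lemma rhom_diff:
  assumes "rhom R M M f" "rhom R M M g"
  shows "rhom R M M (\<lambda>x. f x \<ominus>\<^bsub>M\<^esub> g x)"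
  using rhomD[OF assms(1)] rhomD[OF assms(2)] unfolding rhom_def
  by (auto simp: M.minus_eq M.minus_add ract_add_left ract_neg_left M.a_ac ract_closed)

lemma rhom_ract_left: "b \<in> carrier M \<Longrightarrow> rhom R (RR R) M (\<lambda>r. ract M b r)"
  unfolding rhom_def by (simp add: ract_closed ract_add_right ract_mult)

end

lemma right_module_RR: "ring R \<Longrightarrow> right_module R (RR R)"
proof -
  assume "ring R"
  then interpret ring R .
  have "abelian_group (RR R)"
    by (rule abelian_groupI) (auto simp: a_ac intro: l_neg)
  then show ?thesis
    by (simp add: right_module_def ring_axioms l_distr r_distr m_assoc)
qed

sublocale ring_record \<subseteq> RR: rmodule R "RR R"
  by (rule rmoduleI[OF right_module_RR[OF ring_axioms]])

context rmodule
begin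

lemma coset_eq_iff:
  assumes U: "rsubmodule R M U" and "x \<in> carrier M" "y \<in> carrier M"
  shows "U +>\<^bsub>M\<^esub> x = U +>\<^bsub>M\<^esub> y \<longleftrightarrow> x \<ominus>\<^bsub>M\<^esub> y \<in> U"
proof -
  interpret U: abelian_subgroup U M by (rule rsubmodule_abelian_subgroup[OF U])
  have "x \<in> U +>\<^bsub>M\<^esub> y \<longleftrightarrow> x \<ominus>\<^bsub>M\<^esub> y \<in> U"
    using U.a_rcos_module[OF assms(3,2)] by (simp add: M.minus_eq)
  then show ?thesis
    using U.a_rcos_self[OF assms(2)] U.a_repr_independence'[OF _ assms(3)] by blast
qed

lemma coset_eq_self_iff:
  assumes U: "rsubmodule R M U" and "x \<in> carrier M"
  shows "U +>\<^bsub>M\<^esub> x = U \<longleftrightarrow> x \<in> U"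
proof -
  interpret U: abelian_subgroup U M by (rule rsubmodule_abelian_subgroup[OF U])
  show ?thesis using U.a_rcos_self[OF assms(2)] U.a_rcos_const by blast
qed

lemma coset_add:
  assumes U: "rsubmodule R M U" and "x \<in> carrier M" "y \<in> carrier M"
  shows "(U +>\<^bsub>M\<^esub> x) <+>\<^bsub>M\<^esub> (U +>\<^bsub>M\<^esub> y) = U +>\<^bsub>M\<^esub> (x \<oplus>\<^bsub>M\<^esub> y)"
proof -
  interpret U: abelian_subgroup U M by (rule rsubmodule_abelian_subgroup[OF U])
  show ?thesis using U.a_rcos_sum assms(2,3) .
qed

lemma coset_ract:
  assumes U: "rsubmodule R M U" and x: "x \<in> carrier M" and r: "r \<in> carrier R"
  shows "ract (quot_mod M U) (U +>\<^bsub>M\<^esub> x) r = U +>\<^bsub>M\<^esub> ract M x r"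
proof -
  note UD = rsubmoduleD[OF U]
  have Uc: "\<And>u. u \<in> U \<Longrightarrow> u \<in> carrier M" using UD(1) by blast
  have "z \<in> (\<lambda>w. ract M w r) ` (U +>\<^bsub>M\<^esub> x) <+>\<^bsub>M\<^esub> U \<longleftrightarrow> z \<in> U +>\<^bsub>M\<^esub> ract M x r" for z
  proof
    assume "z \<in> (\<lambda>w. ract M w r) ` (U +>\<^bsub>M\<^esub> x) <+>\<^bsub>M\<^esub> U"
    then obtain u u' where u: "u \<in> U" "u' \<in> U" "z = ract M (u \<oplus>\<^bsub>M\<^esub> x) r \<oplus>\<^bsub>M\<^esub> u'"
      unfolding set_add_def' a_r_coset_def' by blast
    then have "z = (ract M u r \<oplus>\<^bsub>M\<^esub> u') \<oplus>\<^bsub>M\<^esub> ract M x r"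
      using x r Uc by (simp add: ract_add_left ract_closed M.a_ac)
    moreover have "ract M u r \<oplus>\<^bsub>M\<^esub> u' \<in> U" using UD(3,5) u r by blast
    ultimately show "z \<in> U +>\<^bsub>M\<^esub> ract M x r" unfolding a_r_coset_def' by blast
  next
    assume "z \<in> U +>\<^bsub>M\<^esub> ract M x r"
    then obtain u where u: "u \<in> U" "z = u \<oplus>\<^bsub>M\<^esub> ract M x r" unfolding a_r_coset_def' by blast
    then have "z = ract M (\<zero>\<^bsub>M\<^esub> \<oplus>\<^bsub>M\<^esub> x) r \<oplus>\<^bsub>M\<^esub> u"
      using x r Uc by (simp add: ract_closed M.a_comm)
    moreover have "\<zero>\<^bsub>M\<^esub> \<oplus>\<^bsub>M\<^esub> x \<in> U +>\<^bsub>M\<^esub> x" using UD(2) unfolding a_r_coset_def' by blast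
    ultimately show "z \<in> (\<lambda>w. ract M w r) ` (U +>\<^bsub>M\<^esub> x) <+>\<^bsub>M\<^esub> U"
      using u(1) unfolding set_add_def' by blast
  qed
  then show ?thesis by auto
qed

lemma rhom_quot_mod:
  assumes U: "rsubmodule R M U"
  shows "rhom R M (quot_mod M U) (\<lambda>x. U +>\<^bsub>M\<^esub> x)"
  unfolding rhom_def using coset_add[OF U] coset_ract[OF U, simplified] by (auto simp: ract_closed)

lemma right_module_quot_mod:
  assumes U: "rsubmodule R M U"
  shows "right_module R (quot_mod M U)"
proof -
  note simps = coset_add[OF U] coset_ract[OF U, simplified] ract_closed
  have zero: "U +>\<^bsub>M\<^esub> \<zero>\<^bsub>M\<^esub> = U"
    using coset_eq_self_iff[OF U M.zero_closed] rsubmoduleD(2)[OF U] by simp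
  have zero_closed: "U \<in> carrier (quot_mod M U)"
    using zero M.zero_closed by force
  have l_zero: "U <+>\<^bsub>M\<^esub> (U +>\<^bsub>M\<^esub> x) = U +>\<^bsub>M\<^esub> x" if "x \<in> carrier M" for x
    using simps(1)[OF M.zero_closed that] that by (simp add: zero)
  have "abelian_group (quot_mod M U)"
  proof (rule abelian_groupI)
    fix A assume "A \<in> carrier (quot_mod M U)"
    then obtain x where x: "x \<in> carrier M" "A = U +>\<^bsub>M\<^esub> x" by auto
    then show "\<exists>B\<in>carrier (quot_mod M U). B \<oplus>\<^bsub>quot_mod M U\<^esub> A = \<zero>\<^bsub>quot_mod M U\<^esub>"
      by (intro bexI[of _ "U +>\<^bsub>M\<^esub> \<ominus>\<^bsub>M\<^esub> x"]) (auto simp: simps M.l_neg zero)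
  qed (use zero_closed in \<open>auto simp: simps l_zero M.a_ac\<close>)
  then show ?thesis
    unfolding right_module_def
    by (auto simp: ring_axioms simps ract_add_left ract_add_right ract_mult ract_one)
qed

lemma rsubmodule_rsocle: "rsubmodule R M (rsocle R M)"
proof -
  have "carrier M \<in> {V. rsubmodule R M V \<and> (\<forall>U. rsimple_sub R M U \<longrightarrow> U \<subseteq> V)}"
    using rsubmodule_carrier rsubmoduleD(1) unfolding rsimple_sub_def by blast
  then show ?thesis unfolding rsocle_def by (intro rsubmodule_Inter) blast+
qed

lemma rsimple_sub_subset_rsocle: "rsimple_sub R M U \<Longrightarrow> U \<subseteq> rsocle R M"
  unfolding rsocle_def by blast

lemma rsocle_least:
  "rsubmodule R M V \<Longrightarrow> (\<And>U. rsimple_sub R M U \<Longrightarrow> U \<subseteq> V) \<Longrightarrow> rsocle R M \<subseteq> V"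
  unfolding rsocle_def by blast

end

definition rspan :: "'a ring \<Rightarrow> ('a, 'b) module \<Rightarrow> 'b set \<Rightarrow> 'b set" where
  "rspan R M B = {y. \<exists>c\<in>B \<rightarrow> carrier R. y = (\<Oplus>\<^bsub>M\<^esub>b\<in>B. ract M b (c b))}"

lemma fin_gen_iff_rspan:
  "fin_gen R M \<longleftrightarrow> (\<exists>A. finite A \<and> A \<subseteq> carrier M \<and> carrier M \<subseteq> rspan R M A)"
  unfolding fin_gen_def rspan_def by blast

context rmodule
begin

lemma finsum_ract_zero:
  assumes "B \<subseteq> carrier M"
  shows "(\<Oplus>\<^bsub>M\<^esub>b\<in>B. ract M b \<zero>) = \<zero>\<^bsub>M\<^esub>"
proof -
  have "(\<Oplus>\<^bsub>M\<^esub>b\<in>B. ract M b \<zero>) = (\<Oplus>\<^bsub>M\<^esub>b\<in>B. \<zero>\<^bsub>M\<^esub>)"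
    using assms by (intro M.finsum_cong') (auto simp: ract_zero_right)
  then show ?thesis by simp
qed

lemma finsum_regroup:
  assumes A: "finite A" and B: "finite B" "B \<subseteq> carrier M"
    and g: "g ` A \<subseteq> B" and c: "c \<in> A \<rightarrow> carrier R"
  shows "\<exists>d\<in>B \<rightarrow> carrier R. (\<Oplus>\<^bsub>M\<^esub>a\<in>A. ract M (g a) (c a)) = (\<Oplus>\<^bsub>M\<^esub>b\<in>B. ract M b (d b))"
  using A g c
proof (induction A rule: finite_induct)
  case empty
  show ?case using finsum_ract_zero[OF B(2)] by (intro bexI[of _ "\<lambda>b. \<zero>"]) auto
next
  case (insert a A)
  have ga: "g a \<in> B" and ca: "c a \<in> carrier R" using insert.prems by auto
  obtain d where d: "d \<in> B \<rightarrow> carrier R"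
    and sum_A: "(\<Oplus>\<^bsub>M\<^esub>a\<in>A. ract M (g a) (c a)) = (\<Oplus>\<^bsub>M\<^esub>b\<in>B. ract M b (d b))"
    using insert.IH insert.prems by auto
  define d' where "d' = d(g a := d (g a) \<oplus> c a)"
  have Bc: "\<And>b. b \<in> B \<Longrightarrow> b \<in> carrier M" and dc: "\<And>b. b \<in> B \<Longrightarrow> d b \<in> carrier R"
    using B(2) d by auto
  have "(\<Oplus>\<^bsub>M\<^esub>b\<in>B. ract M b (d' b))
      = (\<Oplus>\<^bsub>M\<^esub>b\<in>B. ract M b (d b) \<oplus>\<^bsub>M\<^esub> (if g a = b then ract M b (c a) else \<zero>\<^bsub>M\<^esub>))"
    by (rule M.finsum_cong') (use Bc dc ca in \<open>auto simp: d'_def ract_add_right ract_closed\<close>)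
  also have "\<dots> = (\<Oplus>\<^bsub>M\<^esub>b\<in>B. ract M b (d b))
      \<oplus>\<^bsub>M\<^esub> (\<Oplus>\<^bsub>M\<^esub>b\<in>B. if g a = b then ract M b (c a) else \<zero>\<^bsub>M\<^esub>)"
    by (rule M.finsum_addf) (use Bc dc ca in \<open>auto simp: ract_closed\<close>)
  also have "(\<Oplus>\<^bsub>M\<^esub>b\<in>B. if g a = b then ract M b (c a) else \<zero>\<^bsub>M\<^esub>) = ract M (g a) (c a)"
    using M.finsum_singleton[OF ga B(1), of "\<lambda>b. ract M b (c a)"] Bc ca by (auto simp: ract_closed)
  finally have sum_B: "(\<Oplus>\<^bsub>M\<^esub>b\<in>B. ract M b (d' b))
      = (\<Oplus>\<^bsub>M\<^esub>b\<in>B. ract M b (d b)) \<oplus>\<^bsub>M\<^esub> ract M (g a) (c a)" .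
  have f: "(\<lambda>a. ract M (g a) (c a)) \<in> A \<rightarrow> carrier M"
    using insert.prems Bc by (auto intro!: ract_closed)
  have gac: "ract M (g a) (c a) \<in> carrier M" using Bc[OF ga] ca by (rule ract_closed)
  have "(\<Oplus>\<^bsub>M\<^esub>a\<in>insert a A. ract M (g a) (c a))
      = ract M (g a) (c a) \<oplus>\<^bsub>M\<^esub> (\<Oplus>\<^bsub>M\<^esub>b\<in>B. ract M b (d b))"
    using M.finsum_insert[OF insert.hyps f gac] sum_A by simp
  also have "\<dots> = (\<Oplus>\<^bsub>M\<^esub>b\<in>B. ract M b (d' b))"
    using sum_B gac Bc dc by (simp add: M.a_comm Pi_iff ract_closed)
  finally have "(\<Oplus>\<^bsub>M\<^esub>a\<in>insert a A. ract M (g a) (c a)) = (\<Oplus>\<^bsub>M\<^esub>b\<in>B. ract M b (d' b))" .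
  moreover have "d' \<in> B \<rightarrow> carrier R" using dc ca ga by (auto simp: d'_def)
  ultimately show ?case by metis
qed

lemma fin_gen_image:
  assumes N: "right_module R N" and f: "rhom R M N f" "f ` carrier M = carrier N"
    and fg: "fin_gen R M"
  shows "fin_gen R N"
proof -
  interpret N: rmodule R N by (rule rmoduleI[OF N])
  obtain A where A: "finite A" "A \<subseteq> carrier M" "carrier M \<subseteq> rspan R M A"
    using fg unfolding fin_gen_iff_rspan by blast
  have fA: "f ` A \<subseteq> carrier N" using A(2) rhomD(1)[OF f(1)] by blast
  have "f x \<in> rspan R N (f ` A)" if x: "x \<in> carrier M" for x
  proof -
    have "x \<in> rspan R M A" using A(3) x by blast
    then obtain c where c: "c \<in> A \<rightarrow> carrier R" "x = (\<Oplus>\<^bsub>M\<^esub>a\<in>A. ract M a (c a))"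
      unfolding rspan_def by blast
    have Ac: "\<And>a. a \<in> A \<Longrightarrow> a \<in> carrier M" and cc: "\<And>a. a \<in> A \<Longrightarrow> c a \<in> carrier R"
      using A(2) c(1) by auto
    have terms: "(\<lambda>a. ract M a (c a)) \<in> A \<rightarrow> carrier M" using Ac cc by (auto intro: ract_closed)
    have "f x = (\<Oplus>\<^bsub>N\<^esub>a\<in>A. f (ract M a (c a)))"
      unfolding c(2) by (rule rhom_finsum[OF N f(1) A(1) terms])
    also have "\<dots> = (\<Oplus>\<^bsub>N\<^esub>a\<in>A. ract N (f a) (c a))"
      using Ac cc rhomD[OF f(1)] by (intro N.M.finsum_cong') (auto intro!: N.ract_closed)
    finally have fx: "f x = (\<Oplus>\<^bsub>N\<^esub>a\<in>A. ract N (f a) (c a))" .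
    obtain d where d: "d \<in> f ` A \<rightarrow> carrier R"
      "(\<Oplus>\<^bsub>N\<^esub>a\<in>A. ract N (f a) (c a)) = (\<Oplus>\<^bsub>N\<^esub>b\<in>f ` A. ract N b (d b))"
      using N.finsum_regroup[OF A(1) finite_imageI[OF A(1)] fA subset_refl c(1)] by blast
    show ?thesis unfolding rspan_def using d fx by auto
  qed
  then have "carrier N \<subseteq> rspan R N (f ` A)" unfolding f(2)[symmetric] by blast
  then show ?thesis unfolding fin_gen_iff_rspan using A(1) fA by blast
qed

lemma rsubmodule_rspan:
  assumes B: "finite B" "B \<subseteq> carrier M"
  shows "rsubmodule R M (rspan R M B)"
proof -
  have Bc: "\<And>b. b \<in> B \<Longrightarrow> b \<in> carrier M" using B(2) by blast
  show ?thesis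
  proof (rule rsubmoduleI)
    show "rspan R M B \<subseteq> carrier M"
      unfolding rspan_def using Bc by (auto simp: ract_closed Pi_iff intro!: M.finsum_closed)
    show "\<zero>\<^bsub>M\<^esub> \<in> rspan R M B"
      using finsum_ract_zero[OF B(2)]
      unfolding rspan_def by (intro CollectI bexI[of _ "\<lambda>_. \<zero>"]) auto
  next
    fix u v assume "u \<in> rspan R M B" "v \<in> rspan R M B"
    then obtain c d where c: "c \<in> B \<rightarrow> carrier R" "u = (\<Oplus>\<^bsub>M\<^esub>b\<in>B. ract M b (c b))"
      and d: "d \<in> B \<rightarrow> carrier R" "v = (\<Oplus>\<^bsub>M\<^esub>b\<in>B. ract M b (d b))"
      unfolding rspan_def by blast
    have "u \<oplus>\<^bsub>M\<^esub> v = (\<Oplus>\<^bsub>M\<^esub>b\<in>B. ract M b (c b) \<oplus>\<^bsub>M\<^esub> ract M b (d b))"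
      using c d B(2) by (simp add: Pi_iff ract_closed subset_iff)
    also have "\<dots> = (\<Oplus>\<^bsub>M\<^esub>b\<in>B. ract M b (c b \<oplus> d b))"
      using c(1) d(1) Bc by (intro M.finsum_cong') (auto intro!: ract_closed simp: ract_add_right Pi_iff)
    finally show "u \<oplus>\<^bsub>M\<^esub> v \<in> rspan R M B"
      unfolding rspan_def using c(1) d(1) by (intro CollectI bexI[of _ "\<lambda>b. c b \<oplus> d b"]) auto
  next
    fix u r assume "u \<in> rspan R M B" and r: "r \<in> carrier R"
    then obtain c where c: "c \<in> B \<rightarrow> carrier R" "u = (\<Oplus>\<^bsub>M\<^esub>b\<in>B. ract M b (c b))"
      unfolding rspan_def by blast
    have "ract M u r = (\<Oplus>\<^bsub>M\<^esub>b\<in>B. ract M (ract M b (c b)) r)"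
      using c B r by (simp add: ract_finsum Pi_iff ract_closed subset_iff)
    also have "\<dots> = (\<Oplus>\<^bsub>M\<^esub>b\<in>B. ract M b (c b \<otimes> r))"
      using c(1) Bc r by (intro M.finsum_cong') (auto intro!: ract_closed simp: ract_mult Pi_iff)
    finally show "ract M u r \<in> rspan R M B"
      unfolding rspan_def using c(1) r by (intro CollectI bexI[of _ "\<lambda>b. c b \<otimes> r"]) auto
  qed
qed

lemma rspan_insert:
  assumes B: "finite B" "B \<subseteq> carrier M" "b \<notin> B" "b \<in> carrier M"
    and y: "y \<in> rspan R M (insert b B)"
  shows "\<exists>r\<in>carrier R. y \<ominus>\<^bsub>M\<^esub> ract M b r \<in> rspan R M B"
proof -
  obtain c where c: "c \<in> insert b B \<rightarrow> carrier R" "y = (\<Oplus>\<^bsub>M\<^esub>a\<in>insert b B. ract M a (c a))"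
    using y unfolding rspan_def by blast
  let ?rest = "\<Oplus>\<^bsub>M\<^esub>a\<in>B. ract M a (c a)"
  have f: "(\<lambda>a. ract M a (c a)) \<in> B \<rightarrow> carrier M" and cb: "c b \<in> carrier R"
    using c(1) B(2) by (auto intro!: ract_closed)
  have "y \<ominus>\<^bsub>M\<^esub> ract M b (c b) = ?rest"
    using c(2) B f ract_closed[OF B(4) cb] by (simp add: M.minus_eq M.a_comm M.r_neg1)
  moreover have "?rest \<in> rspan R M B"
    unfolding rspan_def using c(1) by (intro CollectI bexI[of _ c]) auto
  ultimately show ?thesis using cb by metis
qed

end

context ring_record
begin

lemma right_ideal_iff:
  "right_ideal R I \<longleftrightarrow> I \<subseteq> carrier R \<and> \<zero> \<in> I \<and> (\<forall>x\<in>I. \<forall>y\<in>I. x \<oplus> y \<in> I) \<and>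
     (\<forall>x\<in>I. \<ominus> x \<in> I) \<and> (\<forall>x\<in>I. \<forall>r\<in>carrier R. x \<otimes> r \<in> I)"
  by (simp add: right_ideal_def rsubmodule_def)

lemma right_idealD:
  assumes "right_ideal R I"
  shows "I \<subseteq> carrier R" and "\<zero> \<in> I" and "x \<in> I \<Longrightarrow> y \<in> I \<Longrightarrow> x \<oplus> y \<in> I"
    and "x \<in> I \<Longrightarrow> \<ominus> x \<in> I" and "x \<in> I \<Longrightarrow> r \<in> carrier R \<Longrightarrow> x \<otimes> r \<in> I"
    and "x \<in> I \<Longrightarrow> y \<in> I \<Longrightarrow> x \<ominus> y \<in> I"
  using assms unfolding right_ideal_iff by (auto simp: minus_eq)

lemma right_idealI:
  assumes "I \<subseteq> carrier R" "\<zero> \<in> I" "\<And>x y. x \<in> I \<Longrightarrow> y \<in> I \<Longrightarrow> x \<oplus> y \<in> I"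
    and "\<And>x r. x \<in> I \<Longrightarrow> r \<in> carrier R \<Longrightarrow> x \<otimes> r \<in> I"
  shows "right_ideal R I"
  unfolding right_ideal_def using assms by (intro RR.rsubmoduleI) auto

lemma right_ideal_zero: "right_ideal R {\<zero>}"
  by (rule right_idealI) auto

lemma right_ideal_Int: "right_ideal R I \<Longrightarrow> right_ideal R J \<Longrightarrow> right_ideal R (I \<inter> J)"
  by (simp add: right_ideal_iff) blast

lemma right_ideal_set_add:
  assumes I: "right_ideal R I" and J: "right_ideal R J"
  shows "right_ideal R (I <+> J)"
proof -
  note ID = right_idealD[OF I] and JD = right_idealD[OF J]
  show ?thesis
  proof (rule right_idealI)
    show "I <+> J \<subseteq> carrier R" using ID(1) JD(1) by (rule set_add_closed)
    show "\<zero> \<in> I <+> J" using ID(2) JD(2) by (force simp: mem_set_add_iff)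
  next
    fix x y assume "x \<in> I <+> J" "y \<in> I <+> J"
    then obtain a b a' b' where ab: "a \<in> I" "b \<in> J" "a' \<in> I" "b' \<in> J" "x = a \<oplus> b" "y = a' \<oplus> b'"
      by (auto simp: mem_set_add_iff)
    then have "x \<oplus> y = (a \<oplus> a') \<oplus> (b \<oplus> b')"
      using right_idealD(1) I J by (simp add: a_ac subset_iff)
    moreover have "a \<oplus> a' \<in> I" "b \<oplus> b' \<in> J" using ab ID(3) JD(3) by auto
    ultimately show "x \<oplus> y \<in> I <+> J" by (metis mem_set_add_iff)
  next
    fix x r assume "x \<in> I <+> J" "r \<in> carrier R"
    then obtain a b where ab: "a \<in> I" "b \<in> J" "x = a \<oplus> b" by (auto simp: mem_set_add_iff)
    then have "x \<otimes> r = a \<otimes> r \<oplus> b \<otimes> r"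
      using \<open>r \<in> carrier R\<close> ID(1) JD(1) by (simp add: l_distr subset_iff)
    moreover have "a \<otimes> r \<in> I" "b \<otimes> r \<in> J" using ab \<open>r \<in> carrier R\<close> ID(5) JD(5) by auto
    ultimately show "x \<otimes> r \<in> I <+> J" by (metis mem_set_add_iff)
  qed
qed

lemma set_add_subset_left: "right_ideal R J \<Longrightarrow> I \<subseteq> carrier R \<Longrightarrow> I \<subseteq> I <+> J"
  using right_idealD(2) by (force simp: mem_set_add_iff)

lemma set_add_subset_right: "right_ideal R I \<Longrightarrow> J \<subseteq> carrier R \<Longrightarrow> J \<subseteq> I <+> J"
  using right_idealD(2) by (force simp: mem_set_add_iff)

lemma right_ideal_Union_chain:
  assumes "C \<noteq> {}" "\<And>I. I \<in> C \<Longrightarrow> right_ideal R I" "\<And>I J. I \<in> C \<Longrightarrow> J \<in> C \<Longrightarrow> I \<subseteq> J \<or> J \<subseteq> I"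
  shows "right_ideal R (\<Union>C)"
proof (rule right_idealI)
  show "\<Union>C \<subseteq> carrier R" "\<zero> \<in> \<Union>C" using assms(1,2) right_idealD(1,2) by blast+
next
  fix x y assume "x \<in> \<Union>C" "y \<in> \<Union>C"
  then obtain I J where "I \<in> C" "J \<in> C" "x \<in> I" "y \<in> J" by blast
  then show "x \<oplus> y \<in> \<Union>C" using assms(2,3) right_idealD(3) by (metis UnionI subsetD)
qed (use assms(2) right_idealD(5) in blast)

lemma right_ideal_finsum:
  assumes K: "right_ideal R K" and B: "finite B" and f: "\<And>b. b \<in> B \<Longrightarrow> f b \<in> K"
  shows "finsum R f B \<in> K"
  using B f
proof (induction B rule: finite_induct)
  case empty
  then show ?case using right_idealD(2)[OF K] by simp
next
  case (insert b B)
  then have "f \<in> B \<rightarrow> carrier R" "f b \<in> carrier R" using right_idealD(1)[OF K] by auto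
  then show ?case using insert right_idealD(3)[OF K] by simp
qed

lemma right_ideal_diff_refl: "right_ideal R I \<Longrightarrow> a \<in> carrier R \<Longrightarrow> a \<ominus> a \<in> I"
  using right_idealD(2) by (simp add: r_neg minus_eq)

lemma right_ideal_diff_sym:
  assumes "right_ideal R I" "a \<in> carrier R" "b \<in> carrier R" "a \<ominus> b \<in> I"
  shows "b \<ominus> a \<in> I"
proof -
  have "b \<ominus> a = \<ominus> (a \<ominus> b)" using assms(2,3) by algebra
  then show ?thesis using right_idealD(4)[OF assms(1,4)] by simp
qed

lemma right_ideal_diff_trans:
  assumes "right_ideal R I" "a \<in> carrier R" "b \<in> carrier R" "c \<in> carrier R"
    and "a \<ominus> b \<in> I" "b \<ominus> c \<in> I"
  shows "a \<ominus> c \<in> I"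
proof -
  have "a \<ominus> c = (a \<ominus> b) \<oplus> (b \<ominus> c)" using assms(2-4) by algebra
  then show ?thesis using right_idealD(3)[OF assms(1,5,6)] by simp
qed

lemma right_ideal_diff_add:
  assumes "right_ideal R I" "a \<in> carrier R" "b \<in> carrier R" "c \<in> carrier R" "d \<in> carrier R"
    and "a \<ominus> b \<in> I" "c \<ominus> d \<in> I"
  shows "(a \<oplus> c) \<ominus> (b \<oplus> d) \<in> I"
proof -
  have "(a \<oplus> c) \<ominus> (b \<oplus> d) = (a \<ominus> b) \<oplus> (c \<ominus> d)" using assms(2-5) by algebra
  then show ?thesis using right_idealD(3)[OF assms(1,6,7)] by simp
qed

lemma right_ideal_diff_mult:
  assumes "right_ideal R I" "a \<in> carrier R" "b \<in> carrier R" "r \<in> carrier R" "a \<ominus> b \<in> I"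
  shows "a \<otimes> r \<ominus> b \<otimes> r \<in> I"
proof -
  have "a \<otimes> r \<ominus> b \<otimes> r = (a \<ominus> b) \<otimes> r" using assms(2-4) by algebra
  then show ?thesis using right_idealD(5)[OF assms(1,5,4)] by simp
qed

lemma right_ideal_diff_mem:
  assumes "right_ideal R I" "a \<in> carrier R" "b \<in> carrier R" "a \<ominus> b \<in> I" "b \<in> I"
  shows "a \<in> I"
proof -
  have "a = (a \<ominus> b) \<oplus> b" using assms(2,3) by algebra
  then show ?thesis using right_idealD(3)[OF assms(1,4,5)] by simp
qed

lemmas right_ideal_coset_eq_iff = RR.coset_eq_iff[folded right_ideal_def, simplified]

lemmas right_ideal_coset_eq_self_iff = RR.coset_eq_self_iff[folded right_ideal_def, simplified]

lemmas right_ideal_coset_add = RR.coset_add[folded right_ideal_def, simplified]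

lemmas right_ideal_coset_mult = RR.coset_ract[folded right_ideal_def, simplified]

lemmas right_module_quot_RR = RR.right_module_quot_mod[folded right_ideal_def]

lemmas rhom_quot_RR = RR.rhom_quot_mod[folded right_ideal_def, simplified]

lemma rsubmodule_quot_image:
  assumes "right_ideal R S" "right_ideal R W"
  shows "rsubmodule R (quot_mod (RR R) S) ((\<lambda>w. S +> w) ` W)"
  using RR.rsubmodule_image[OF right_module_quot_RR rhom_quot_RR, of S W] assms
  by (simp add: right_ideal_def)

lemma right_ideal_quot_vimage:
  assumes S: "right_ideal R S" and V: "rsubmodule R (quot_mod (RR R) S) V"
  shows "right_ideal R {w \<in> carrier R. S +> w \<in> V}" and "S \<subseteq> {w \<in> carrier R. S +> w \<in> V}"
proof -
  show "right_ideal R {w \<in> carrier R. S +> w \<in> V}"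
    using RR.rsubmodule_vimage[OF right_module_quot_RR[OF S] rhom_quot_RR[OF S] V]
    by (simp add: right_ideal_def)
  show "S \<subseteq> {w \<in> carrier R. S +> w \<in> V}"
  proof
    fix x assume "x \<in> S"
    then have "x \<in> carrier R" "S +> x = S"
      using right_idealD(1)[OF S] right_ideal_coset_eq_self_iff[OF S] by auto
    then show "x \<in> {w \<in> carrier R. S +> w \<in> V}" using rsubmoduleD(2)[OF V] by simp
  qed
qed

lemma next_socle_eq: "next_socle R S = {w \<in> carrier R. S +> w \<in> rsocle R (quot_mod (RR R) S)}"
  by (simp add: next_socle_def)

lemma rsubmodule_rsocle_quot:
  "right_ideal R S \<Longrightarrow> rsubmodule R (quot_mod (RR R) S) (rsocle R (quot_mod (RR R) S))"
  using rmodule.rsubmodule_rsocle[OF rmoduleI[OF right_module_quot_RR]] .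

lemma right_ideal_next_socle: "right_ideal R S \<Longrightarrow> right_ideal R (next_socle R S)"
  and subset_next_socle: "right_ideal R S \<Longrightarrow> S \<subseteq> next_socle R S"
  unfolding next_socle_eq using right_ideal_quot_vimage[OF _ rsubmodule_rsocle_quot] by auto

lemma right_module_layer:
  assumes S: "right_ideal R S"
  shows "right_module R (layer R S)"
proof -
  let ?S' = "next_socle R S"
  have "rsubmodule R (RR R) ?S'" using right_ideal_next_socle[OF S] by (simp add: right_ideal_def)
  then interpret S': rmodule R "submod (RR R) ?S'" by (rule rmoduleI[OF RR.right_module_submod])
  have "rsubmodule R (submod (RR R) ?S') S"
    by (rule S'.rsubmoduleI) (use right_idealD[OF S] subset_next_socle[OF S] in auto)
  then show ?thesis unfolding layer_def by (rule S'.right_module_quot_mod)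
qed

end

section \<open>Complements in the next socle\<close>

context ring_record
begin

lemma exists_maximal_partial_complement:
  assumes S: "right_ideal R S"
  obtains Y where "right_ideal R Y" "S \<subseteq> Y" "Y \<subseteq> next_socle R S" "Y \<inter> J \<subseteq> S"
    "\<forall>Z. right_ideal R Z \<and> Y \<subseteq> Z \<and> Z \<subseteq> next_socle R S \<and> Z \<inter> J \<subseteq> S \<longrightarrow> Z = Y"
proof -
  define YY where "YY = {Y. right_ideal R Y \<and> S \<subseteq> Y \<and> Y \<subseteq> next_socle R S \<and> Y \<inter> J \<subseteq> S}"
  have "S \<in> YY" unfolding YY_def using S subset_next_socle[OF S] by blast
  have "\<exists>U\<in>YY. \<forall>Z\<in>C. Z \<subseteq> U" if C: "C \<in> chains YY" for C
  proof (cases "C = {}")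
    case True
    then show ?thesis using \<open>S \<in> YY\<close> by blast
  next
    case False
    have "right_ideal R (\<Union>C)"
      by (rule right_ideal_Union_chain[OF False]) (use chainsD[OF C] chainsD2[OF C] in \<open>auto simp: YY_def\<close>)
    then have "\<Union>C \<in> YY" using False chainsD2[OF C] unfolding YY_def by blast
    then show ?thesis by blast
  qed
  then obtain Y where Y: "Y \<in> YY" and max: "\<forall>Z\<in>YY. Y \<subseteq> Z \<longrightarrow> Z = Y"
    using Zorn_Lemma2[of YY] by blast
  show thesis
  proof (rule that)
    show "right_ideal R Y" "S \<subseteq> Y" "Y \<subseteq> next_socle R S" "Y \<inter> J \<subseteq> S"
      using Y unfolding YY_def by auto
    show "\<forall>Z. right_ideal R Z \<and> Y \<subseteq> Z \<and> Z \<subseteq> next_socle R S \<and> Z \<inter> J \<subseteq> S \<longrightarrow> Z = Y"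
    proof (intro allI impI, elim conjE)
      fix Z assume Z: "right_ideal R Z" "Y \<subseteq> Z" "Z \<subseteq> next_socle R S" "Z \<inter> J \<subseteq> S"
      then have "Z \<in> YY" using Y unfolding YY_def by blast
      then show "Z = Y" using max Z(2) by blast
    qed
  qed
qed

lemma maximal_partial_complement_absorbs:
  assumes S: "right_ideal R S" and J: "right_ideal R J"
    and Y: "right_ideal R Y" "S \<subseteq> Y" "Y \<subseteq> next_socle R S" "Y \<inter> J \<subseteq> S"
    and Ymax: "\<And>Z. right_ideal R Z \<Longrightarrow> Y \<subseteq> Z \<Longrightarrow> Z \<subseteq> next_socle R S \<Longrightarrow> Z \<inter> J \<subseteq> S \<Longrightarrow> Z = Y"
    and U: "right_ideal R U" "U \<subseteq> next_socle R S" "U \<inter> (Y <+> J) \<subseteq> S"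
  shows "U \<subseteq> S"
proof -
  have "Y <+> U = Y"
  proof (rule Ymax)
    show "right_ideal R (Y <+> U)" by (rule right_ideal_set_add[OF Y(1) U(1)])
    show "Y \<subseteq> Y <+> U" by (rule set_add_subset_left[OF U(1) right_idealD(1)[OF Y(1)]])
    show "Y <+> U \<subseteq> next_socle R S"
      using right_idealD(3)[OF right_ideal_next_socle[OF S]] Y(3) U(2)
      by (auto simp: mem_set_add_iff subset_iff)
    show "(Y <+> U) \<inter> J \<subseteq> S"
    proof
      fix z assume z: "z \<in> (Y <+> U) \<inter> J"
      then obtain y u where yu: "y \<in> Y" "u \<in> U" "z = y \<oplus> u" by (auto simp: mem_set_add_iff)
      have "y \<in> carrier R" "u \<in> carrier R" using yu right_idealD(1) Y(1) U(1) by auto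
      then have "u = \<ominus> y \<oplus> z" using yu(3) by (simp add: r_neg1)
      then have "u \<in> Y <+> J" using right_idealD(4)[OF Y(1) yu(1)] z by (auto simp: mem_set_add_iff)
      then have "u \<in> Y" using yu(2) U(3) Y(2) by blast
      then have "z \<in> Y" using right_idealD(3)[OF Y(1) yu(1)] yu(3) by simp
      then show "z \<in> S" using z Y(4) by blast
    qed
  qed
  then have "U \<subseteq> Y" using set_add_subset_right[OF Y(1) right_idealD(1)[OF U(1)]] by blast
  then show ?thesis using U(3) set_add_subset_left[OF J right_idealD(1)[OF Y(1)]] by blast
qed

lemma simple_sub_in_maximal_complement:
  assumes S: "right_ideal R S" and J: "right_ideal R J"
    and Y: "right_ideal R Y" "S \<subseteq> Y" "Y \<subseteq> next_socle R S" "Y \<inter> J \<subseteq> S"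
    and Ymax: "\<And>Z. right_ideal R Z \<Longrightarrow> Y \<subseteq> Z \<Longrightarrow> Z \<subseteq> next_socle R S \<Longrightarrow> Z \<inter> J \<subseteq> S \<Longrightarrow> Z = Y"
    and U: "rsimple_sub R (quot_mod (RR R) S) U"
  shows "U \<subseteq> (\<lambda>w. S +> w) ` (Y <+> J)"
proof -
  let ?Q = "quot_mod (RR R) S" and ?W = "Y <+> J"
  have Usub: "rsubmodule R ?Q U" and Unz: "U \<noteq> {S}"
    and Umin: "\<And>V. rsubmodule R ?Q V \<Longrightarrow> V \<subseteq> U \<Longrightarrow> V = {S} \<or> V = U"
    using U unfolding rsimple_sub_def by auto
  define U' where "U' = {w \<in> carrier R. S +> w \<in> U}"
  have U': "right_ideal R U'" using right_ideal_quot_vimage[OF S Usub] unfolding U'_def by auto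
  have U'_sub: "U' \<subseteq> next_socle R S"
    using rmodule.rsimple_sub_subset_rsocle[OF rmoduleI[OF right_module_quot_RR[OF S]] U]
    unfolding U'_def next_socle_eq by blast
  have "rsubmodule R ?Q ((\<lambda>w. S +> w) ` (U' \<inter> ?W))"
    by (rule rsubmodule_quot_image[OF S right_ideal_Int[OF U' right_ideal_set_add[OF Y(1) J]]])
  moreover have "(\<lambda>w. S +> w) ` (U' \<inter> ?W) \<subseteq> U" unfolding U'_def by auto
  ultimately consider "(\<lambda>w. S +> w) ` (U' \<inter> ?W) = U" | "(\<lambda>w. S +> w) ` (U' \<inter> ?W) = {S}"
    using Umin by blast
  then show ?thesis
  proof cases
    case 1
    then show ?thesis by auto
  next
    case 2
    have "U' \<inter> ?W \<subseteq> S"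
    proof
      fix v assume v: "v \<in> U' \<inter> ?W"
      then have "v \<in> carrier R" unfolding U'_def by blast
      then show "v \<in> S" using v 2 right_ideal_coset_eq_self_iff[OF S] by blast
    qed
    then have U'S: "U' \<subseteq> S" using maximal_partial_complement_absorbs[OF S J Y Ymax U' U'_sub] by blast
    obtain A where A: "A \<in> U" "A \<noteq> S" using Unz rsubmoduleD(2)[OF Usub] by auto
    then obtain w where w: "w \<in> carrier R" "A = S +> w" using rsubmoduleD(1)[OF Usub] by auto
    then have "w \<in> S" using A(1) U'S unfolding U'_def by blast
    then show ?thesis using A(2) w right_ideal_coset_eq_self_iff[OF S] by simp
  qed
qed

lemma right_ideal_complement_in_next_socle:
  assumes S: "right_ideal R S" and J: "right_ideal R J"
  obtains Y where "right_ideal R Y" "S \<subseteq> Y" "Y \<subseteq> next_socle R S" "Y \<inter> J \<subseteq> S"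
    "next_socle R S \<subseteq> Y <+> J"
proof -
  obtain Y where Y: "right_ideal R Y" "S \<subseteq> Y" "Y \<subseteq> next_socle R S" "Y \<inter> J \<subseteq> S"
    and max: "\<forall>Z. right_ideal R Z \<and> Y \<subseteq> Z \<and> Z \<subseteq> next_socle R S \<and> Z \<inter> J \<subseteq> S \<longrightarrow> Z = Y"
    by (rule exists_maximal_partial_complement[where J = J, OF S])
  have Ymax: "\<And>Z. right_ideal R Z \<Longrightarrow> Y \<subseteq> Z \<Longrightarrow> Z \<subseteq> next_socle R S \<Longrightarrow> Z \<inter> J \<subseteq> S \<Longrightarrow> Z = Y"
    using max by blast
  let ?W = "Y <+> J"
  have W: "right_ideal R ?W" by (rule right_ideal_set_add[OF Y(1) J])
  have soc: "rsocle R (quot_mod (RR R) S) \<subseteq> (\<lambda>w. S +> w) ` ?W"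
  proof (rule rmodule.rsocle_least[OF rmoduleI[OF right_module_quot_RR[OF S]]])
    show "rsubmodule R (quot_mod (RR R) S) ((\<lambda>w. S +> w) ` ?W)" by (rule rsubmodule_quot_image[OF S W])
    show "U \<subseteq> (\<lambda>w. S +> w) ` ?W" if "rsimple_sub R (quot_mod (RR R) S) U" for U
      by (rule simple_sub_in_maximal_complement[OF S J Y Ymax that])
  qed
  have "next_socle R S \<subseteq> ?W"
  proof
    fix z assume "z \<in> next_socle R S"
    then have z: "z \<in> carrier R" "S +> z \<in> rsocle R (quot_mod (RR R) S)" unfolding next_socle_eq by auto
    then obtain w where w: "w \<in> ?W" "S +> z = S +> w" using soc by blast
    have "w \<in> carrier R" using w(1) right_idealD(1)[OF W] by blast
    then have "z \<ominus> w \<in> ?W"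
      using right_ideal_coset_eq_iff[OF S z(1)] w(2) Y(2) set_add_subset_left[OF J right_idealD(1)[OF Y(1)]]
      by blast
    then show "z \<in> ?W" using right_ideal_diff_mem[OF W z(1) \<open>w \<in> carrier R\<close> _ w(1)] by blast
  qed
  then show thesis using that Y by blast
qed

end

section \<open>The socle sequence is a chain\<close>

text \<open>The argument of \<open>suc_Union_closed_total\<close> in theory \<open>Zorn\<close>, for an arbitrary inflationary map.\<close>

inductive_set tower :: "('x set \<Rightarrow> 'x set) \<Rightarrow> 'x set \<Rightarrow> 'x set set" for f b where
  base: "b \<in> tower f b"
| step: "A \<in> tower f b \<Longrightarrow> f A \<in> tower f b"
| Union: "C \<noteq> {} \<Longrightarrow> \<forall>A\<in>C. A \<in> tower f b \<Longrightarrow> \<Union>C \<in> tower f b"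

context
  fixes f :: "'x set \<Rightarrow> 'x set"
  assumes inflationary: "\<And>A. A \<subseteq> f A"
begin

lemma tower_lower: "A \<in> tower f b \<Longrightarrow> b \<subseteq> A"
proof (induction rule: tower.induct)
  case (step A)
  then show ?case using inflationary[of A] by blast
qed blast+

lemma tower_subset_or_step:
  assumes "A \<in> tower f b" "Y \<in> tower f b"
    and Y: "\<And>Z. Z \<in> tower f b \<Longrightarrow> Z \<subseteq> Y \<Longrightarrow> Y = Z \<or> f Z \<subseteq> Y"
  shows "A \<subseteq> Y \<or> f Y \<subseteq> A"
  using assms(1)
proof (induction rule: tower.induct)
  case base
  then show ?case using tower_lower[OF assms(2)] by blast
next
  case (step A)
  from step.IH show ?case
  proof
    assume "A \<subseteq> Y"
    then have "Y = A \<or> f A \<subseteq> Y" using Y[OF step.hyps] by blast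
    then show ?thesis using inflationary[of A] by blast
  next
    assume "f Y \<subseteq> A"
    then show ?thesis using inflationary[of A] by blast
  qed
next
  case (Union C)
  show ?case
  proof (cases "\<exists>Z\<in>C. f Y \<subseteq> Z")
    case False
    then have "\<forall>Z\<in>C. Z \<subseteq> Y" using Union.IH by blast
    then show ?thesis by blast
  qed blast
qed

lemma tower_subsetD:
  assumes "A \<in> tower f b"
  shows "Y \<in> tower f b \<Longrightarrow> Y \<subseteq> A \<Longrightarrow> A = Y \<or> f Y \<subseteq> A"
  using assms
proof (induction arbitrary: Y rule: tower.induct)
  case base
  then show ?case using tower_lower by blast
next
  case (step A)
  have "Y \<subseteq> A \<or> f A \<subseteq> Y" using tower_subset_or_step[OF step.prems(1) step.hyps step.IH] .
  then show ?case
  proof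
    assume "Y \<subseteq> A"
    then have "A = Y \<or> f Y \<subseteq> A" using step.IH step.prems(1) by blast
    then show ?thesis using inflationary[of A] by blast
  next
    assume "f A \<subseteq> Y"
    then show ?thesis using step.prems(2) by blast
  qed
next
  case (Union C)
  show ?case
  proof (rule ccontr)
    assume contra: "\<not> (\<Union>C = Y \<or> f Y \<subseteq> \<Union>C)"
    then obtain Z where Z: "Z \<in> C" "\<not> Z \<subseteq> Y" using Union.prems(2) by blast
    then have IHZ: "\<And>Y'. Y' \<in> tower f b \<Longrightarrow> Y' \<subseteq> Z \<Longrightarrow> Z = Y' \<or> f Y' \<subseteq> Z"
      using Union.IH by blast
    have "Z \<in> tower f b" using Union.IH Z(1) by blast
    then have "Y \<subseteq> Z \<or> f Z \<subseteq> Y" using tower_subset_or_step[OF Union.prems(1) _ IHZ] by blast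
    then show False
    proof
      assume "Y \<subseteq> Z"
      then show False using IHZ[OF Union.prems(1)] Z contra by blast
    next
      assume "f Z \<subseteq> Y"
      then show False using inflationary[of Z] Z(2) by blast
    qed
  qed
qed

lemma tower_total:
  assumes "A \<in> tower f b" "Y \<in> tower f b"
  shows "A \<subseteq> Y \<or> Y \<subseteq> A"
  using tower_subset_or_step[OF assms tower_subsetD[OF assms(2)]] inflationary[of Y] by blast

end

context ring_record
begin

text \<open>The map \<open>I \<mapsto> I \<union> next_socle R I\<close> is inflationary on all sets and agrees with \<open>next_socle R\<close>
  on right ideals.\<close>

abbreviation next_socle_tower :: "'a set set" where
  "next_socle_tower \<equiv> tower (\<lambda>I. I \<union> next_socle R I) {\<zero>}"

lemma right_ideal_next_socle_tower: "I \<in> next_socle_tower \<Longrightarrow> right_ideal R I"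
proof (induction rule: tower.induct)
  case base
  then show ?case by (rule right_ideal_zero)
next
  case (step I)
  then show ?case using right_ideal_next_socle subset_next_socle by (simp add: Un_absorb1)
next
  case (Union C)
  then show ?case
    using tower_total[of "\<lambda>I. I \<union> next_socle R I"] by (intro right_ideal_Union_chain) blast+
qed

lemma socle_seq_subset_tower: "I \<in> socle_seq R \<Longrightarrow> I \<in> next_socle_tower"
proof (induction rule: socle_seq.induct)
  case zero
  then show ?case by (rule tower.base)
next
  case (succ I)
  then show ?case
    using tower.step[OF succ.IH] right_ideal_next_socle_tower subset_next_socle by (simp add: Un_absorb1)
next
  case (lim C)
  then show ?case by (blast intro: tower.Union)
qed

lemma right_ideal_socle_seq: "I \<in> socle_seq R \<Longrightarrow> right_ideal R I"
  using socle_seq_subset_tower right_ideal_next_socle_tower by blast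

lemma socle_seq_total: "I \<in> socle_seq R \<Longrightarrow> J \<in> socle_seq R \<Longrightarrow> I \<subseteq> J \<or> J \<subseteq> I"
  using socle_seq_subset_tower tower_total[of "\<lambda>I. I \<union> next_socle R I"] by blast

lemma carrier_in_socle_seq:
  assumes "right_semiartinian R"
  shows "carrier R \<in> socle_seq R"
proof -
  let ?U = "\<Union>(socle_seq R)"
  have U: "?U \<in> socle_seq R" by (rule socle_seq.lim) (use socle_seq.zero in blast)+
  have ideal_U: "right_ideal R ?U" by (rule right_ideal_socle_seq[OF U])
  have "?U = carrier R"
  proof (rule ccontr)
    assume "?U \<noteq> carrier R"
    then have "rsocle R (quot_mod (RR R) ?U) \<noteq> {?U}"
      using assms ideal_U unfolding right_semiartinian_def by simp
    moreover have "?U \<in> rsocle R (quot_mod (RR R) ?U)"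
      using rsubmoduleD(2)[OF rsubmodule_rsocle_quot[OF ideal_U]] by simp
    ultimately obtain A where A: "A \<in> rsocle R (quot_mod (RR R) ?U)" "A \<noteq> ?U" by blast
    then obtain x where x: "x \<in> carrier R" "A = ?U +> x"
      using rsubmoduleD(1)[OF rsubmodule_rsocle_quot[OF ideal_U]] by auto
    then have "x \<in> next_socle R ?U" using A unfolding next_socle_eq by simp
    then have "x \<in> ?U" using socle_seq.succ[OF U] by blast
    then show False using A x right_ideal_coset_eq_self_iff[OF ideal_U x(1)] by simp
  qed
  then show ?thesis using U by simp
qed

end

section \<open>Maps that are linear modulo a right ideal\<close>

definition rhom_modulo :: "'a ring \<Rightarrow> ('a, 'b) module \<Rightarrow> 'a set \<Rightarrow> ('b \<Rightarrow> 'a) \<Rightarrow> bool" where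
  "rhom_modulo R M I \<phi> \<longleftrightarrow> \<phi> \<in> carrier M \<rightarrow> carrier R \<and>
     (\<forall>x\<in>carrier M. \<forall>y\<in>carrier M. \<phi> (x \<oplus>\<^bsub>M\<^esub> y) \<ominus>\<^bsub>R\<^esub> (\<phi> x \<oplus>\<^bsub>R\<^esub> \<phi> y) \<in> I) \<and>
     (\<forall>x\<in>carrier M. \<forall>r\<in>carrier R. \<phi> (ract M x r) \<ominus>\<^bsub>R\<^esub> \<phi> x \<otimes>\<^bsub>R\<^esub> r \<in> I)"

context rmodule
begin

lemma rhom_moduloD:
  assumes "rhom_modulo R M I \<phi>"
  shows "x \<in> carrier M \<Longrightarrow> \<phi> x \<in> carrier R"
    and "x \<in> carrier M \<Longrightarrow> y \<in> carrier M \<Longrightarrow> \<phi> (x \<oplus>\<^bsub>M\<^esub> y) \<ominus> (\<phi> x \<oplus> \<phi> y) \<in> I"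
    and "x \<in> carrier M \<Longrightarrow> r \<in> carrier R \<Longrightarrow> \<phi> (ract M x r) \<ominus> \<phi> x \<otimes> r \<in> I"
  using assms unfolding rhom_modulo_def by auto

lemma rhom_modulo_mono: "I \<subseteq> J \<Longrightarrow> rhom_modulo R M I \<phi> \<Longrightarrow> rhom_modulo R M J \<phi>"
  unfolding rhom_modulo_def by blast

lemma rhom_modulo_Int: "rhom_modulo R M I \<phi> \<Longrightarrow> rhom_modulo R M J \<phi> \<Longrightarrow> rhom_modulo R M (I \<inter> J) \<phi>"
  unfolding rhom_modulo_def by blast

lemma rhom_modulo_of_values_in:
  assumes Y: "right_ideal R Y" and h: "h \<in> carrier M \<rightarrow> Y"
  shows "rhom_modulo R M Y h"
proof -
  have "\<And>x. x \<in> carrier M \<Longrightarrow> h x \<in> Y" using h by blast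
  then show ?thesis
    unfolding rhom_modulo_def using right_idealD[OF Y] by (auto simp: ract_closed)
qed

lemma rhom_of_rhom_modulo_zero:
  assumes "rhom_modulo R M {\<zero>} h"
  shows "rhom R M (RR R) h"
proof -
  have eq: "a = b" if "a \<in> carrier R" "b \<in> carrier R" "a \<ominus> b = \<zero>" for a b
  proof -
    have "a = (a \<ominus> b) \<oplus> b" using that(1,2) by algebra
    then show ?thesis using that by simp
  qed
  note h = rhom_moduloD[OF assms]
  show ?thesis
    unfolding rhom_def
  proof (intro conjI ballI)
    show "h \<in> carrier M \<rightarrow> carrier (RR R)" using h(1) by auto
  next
    fix x y assume xy: "x \<in> carrier M" "y \<in> carrier M"
    have "h (x \<oplus>\<^bsub>M\<^esub> y) \<ominus> (h x \<oplus> h y) = \<zero>" using h(2)[OF xy] by simp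
    then show "h (x \<oplus>\<^bsub>M\<^esub> y) = h x \<oplus>\<^bsub>RR R\<^esub> h y"
      using eq[OF h(1) a_closed[OF h(1) h(1)]] xy by simp
  next
    fix x r assume xr: "x \<in> carrier M" "r \<in> carrier R"
    have "h (ract M x r) \<ominus> h x \<otimes> r = \<zero>" using h(3)[OF xr] by simp
    then show "h (ract M x r) = ract (RR R) (h x) r"
      using eq[OF h(1) m_closed[OF h(1) xr(2)]] xr ract_closed by simp
  qed
qed

lemma rhom_modulo_cong:
  assumes J: "right_ideal R J" and \<phi>: "rhom_modulo R M J \<phi>" and h: "h \<in> carrier M \<rightarrow> carrier R"
    and \<phi>h: "\<And>x. x \<in> carrier M \<Longrightarrow> \<phi> x \<ominus> h x \<in> J"
  shows "rhom_modulo R M J h"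
proof -
  note \<phi>D = rhom_moduloD[OF \<phi>]
  have hc: "\<And>x. x \<in> carrier M \<Longrightarrow> h x \<in> carrier R" using h by blast
  have h\<phi>: "\<And>x. x \<in> carrier M \<Longrightarrow> h x \<ominus> \<phi> x \<in> J"
    using right_ideal_diff_sym[OF J \<phi>D(1) hc \<phi>h] .
  have "h (x \<oplus>\<^bsub>M\<^esub> y) \<ominus> (h x \<oplus> h y) \<in> J" if xy: "x \<in> carrier M" "y \<in> carrier M" for x y
  proof -
    have "h (x \<oplus>\<^bsub>M\<^esub> y) \<ominus> (\<phi> x \<oplus> \<phi> y) \<in> J"
      using right_ideal_diff_trans[OF J _ _ _ h\<phi> \<phi>D(2)[OF xy]] xy \<phi>D(1) hc by simp
    then show ?thesis
      using right_ideal_diff_trans[OF J _ _ _ _ right_ideal_diff_add[OF J _ _ _ _ \<phi>h \<phi>h]] xy \<phi>D(1) hc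
      by simp
  qed
  moreover have "h (ract M x r) \<ominus> h x \<otimes> r \<in> J" if xr: "x \<in> carrier M" "r \<in> carrier R" for x r
  proof -
    have "h (ract M x r) \<ominus> \<phi> x \<otimes> r \<in> J"
      using right_ideal_diff_trans[OF J _ _ _ h\<phi> \<phi>D(3)[OF xr]] xr \<phi>D(1) hc ract_closed by simp
    then show ?thesis
      using right_ideal_diff_trans[OF J _ _ _ _ right_ideal_diff_mult[OF J _ _ _ \<phi>h]] xr \<phi>D(1) hc ract_closed
      by simp
  qed
  ultimately show ?thesis unfolding rhom_modulo_def using h by blast
qed

lemma rhom_modulo_diff:
  assumes \<phi>: "rhom_modulo R M I \<phi>" and g: "rhom R M (RR R) g"
  shows "rhom_modulo R M I (\<lambda>x. \<phi> x \<ominus> g x)"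
proof -
  note \<phi>D = rhom_moduloD[OF \<phi>]
  have gc: "\<And>x. x \<in> carrier M \<Longrightarrow> g x \<in> carrier R" using rhomD(1)[OF g] by simp
  have "(\<phi> (x \<oplus>\<^bsub>M\<^esub> y) \<ominus> g (x \<oplus>\<^bsub>M\<^esub> y)) \<ominus> ((\<phi> x \<ominus> g x) \<oplus> (\<phi> y \<ominus> g y))
      = \<phi> (x \<oplus>\<^bsub>M\<^esub> y) \<ominus> (\<phi> x \<oplus> \<phi> y)" if "x \<in> carrier M" "y \<in> carrier M" for x y
  proof -
    have "g (x \<oplus>\<^bsub>M\<^esub> y) = g x \<oplus> g y" using rhomD(2)[OF g that] by simp
    moreover have "\<phi> (x \<oplus>\<^bsub>M\<^esub> y) \<in> carrier R" "\<phi> x \<in> carrier R" "\<phi> y \<in> carrier R"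
      "g x \<in> carrier R" "g y \<in> carrier R" using that \<phi>D(1) gc by auto
    ultimately show ?thesis by (simp only:) algebra
  qed
  moreover have "(\<phi> (ract M x r) \<ominus> g (ract M x r)) \<ominus> (\<phi> x \<ominus> g x) \<otimes> r
      = \<phi> (ract M x r) \<ominus> \<phi> x \<otimes> r" if "x \<in> carrier M" "r \<in> carrier R" for x r
  proof -
    have "g (ract M x r) = g x \<otimes> r" using rhomD(3)[OF g that] by simp
    moreover have "\<phi> (ract M x r) \<in> carrier R" "\<phi> x \<in> carrier R" "g x \<in> carrier R"
      using that \<phi>D(1) gc ract_closed by auto
    ultimately show ?thesis using that(2) by (simp only:) algebra
  qed
  ultimately show ?thesis
    unfolding rhom_modulo_def using \<phi>D gc by (auto simp: ract_closed)
qed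

lemma rhom_modulo_zero:
  assumes I: "right_ideal R I" and \<phi>: "rhom_modulo R M I \<phi>"
  shows "\<phi> \<zero>\<^bsub>M\<^esub> \<in> I"
proof -
  have c: "\<phi> \<zero>\<^bsub>M\<^esub> \<in> carrier R" using rhom_moduloD(1)[OF \<phi>] by simp
  have "\<phi> (\<zero>\<^bsub>M\<^esub> \<oplus>\<^bsub>M\<^esub> \<zero>\<^bsub>M\<^esub>) \<ominus> (\<phi> \<zero>\<^bsub>M\<^esub> \<oplus> \<phi> \<zero>\<^bsub>M\<^esub>) = \<ominus> \<phi> \<zero>\<^bsub>M\<^esub>"
    using c by simp algebra
  then have "\<ominus> \<phi> \<zero>\<^bsub>M\<^esub> \<in> I" using rhom_moduloD(2)[OF \<phi>, of "\<zero>\<^bsub>M\<^esub>" "\<zero>\<^bsub>M\<^esub>"] by simp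
  then show ?thesis using right_idealD(4)[OF I] c by fastforce
qed

lemma rhom_modulo_finsum:
  assumes I: "right_ideal R I" and \<phi>: "rhom_modulo R M I \<phi>"
    and B: "finite B" "B \<subseteq> carrier M" and c: "c \<in> B \<rightarrow> carrier R"
  shows "\<phi> (\<Oplus>\<^bsub>M\<^esub>b\<in>B. ract M b (c b)) \<ominus> (\<Oplus>b\<in>B. \<phi> b \<otimes> c b) \<in> I"
  using B c
proof (induction B rule: finite_induct)
  case empty
  then show ?case
    using rhom_modulo_zero[OF I \<phi>] rhom_moduloD(1)[OF \<phi>] by (simp add: minus_eq)
next
  case (insert b B)
  note \<phi>D = rhom_moduloD[OF \<phi>]
  have b: "b \<in> carrier M" "c b \<in> carrier R" and B': "B \<subseteq> carrier M" "c \<in> B \<rightarrow> carrier R"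
    using insert.prems by auto
  let ?m = "ract M b (c b)" and ?s = "\<Oplus>\<^bsub>M\<^esub>b\<in>B. ract M b (c b)" and ?t = "\<Oplus>b\<in>B. \<phi> b \<otimes> c b"
  have f: "(\<lambda>b. ract M b (c b)) \<in> B \<rightarrow> carrier M" "(\<lambda>b. \<phi> b \<otimes> c b) \<in> B \<rightarrow> carrier R"
    using B' \<phi>D(1) by (auto intro!: ract_closed)
  have m: "?m \<in> carrier M" "?s \<in> carrier M" "?t \<in> carrier R"
    using b f by (auto simp: ract_closed)
  have "\<phi> (?m \<oplus>\<^bsub>M\<^esub> ?s) \<ominus> (\<phi> b \<otimes> c b \<oplus> ?t) \<in> I"
  proof (rule right_ideal_diff_trans[OF I _ _ _ \<phi>D(2)[OF m(1,2)]])
    show "(\<phi> ?m \<oplus> \<phi> ?s) \<ominus> (\<phi> b \<otimes> c b \<oplus> ?t) \<in> I"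
      using right_ideal_diff_add[OF I _ _ _ _ \<phi>D(3)[OF b] insert.IH[OF B']] \<phi>D(1) b m by simp
  qed (use \<phi>D(1) b m in auto)
  then show ?case using insert.hyps f b m \<phi>D(1)[OF b(1)] by simp
qed

lemma rhom_modulo_values_rspan:
  assumes K: "right_ideal R K" and I: "right_ideal R I" "I \<subseteq> K" and \<phi>: "rhom_modulo R M I \<phi>"
    and A: "finite A" "A \<subseteq> carrier M" and \<phi>A: "\<And>a. a \<in> A \<Longrightarrow> \<phi> a \<in> K"
    and x: "x \<in> rspan R M A"
  shows "\<phi> x \<in> K"
proof -
  obtain c where c: "c \<in> A \<rightarrow> carrier R" "x = (\<Oplus>\<^bsub>M\<^esub>a\<in>A. ract M a (c a))"
    using x unfolding rspan_def by blast
  have xc: "x \<in> carrier M" using x rsubmoduleD(1)[OF rsubmodule_rspan[OF A]] by blast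
  have sum: "(\<Oplus>a\<in>A. \<phi> a \<otimes> c a) \<in> K"
    by (rule right_ideal_finsum[OF K A(1)]) (use \<phi>A c(1) right_idealD(5)[OF K] in blast)
  have "\<phi> x \<ominus> (\<Oplus>a\<in>A. \<phi> a \<otimes> c a) \<in> K"
    using rhom_modulo_finsum[OF I(1) \<phi> A c(1)] c(2) I(2) by blast
  then show ?thesis
    using right_ideal_diff_mem[OF K rhom_moduloD(1)[OF \<phi> xc] _ _ sum] right_idealD(1)[OF K] sum by blast
qed

lemma rhom_layer:
  assumes S: "right_ideal R S"
    and h: "rhom_modulo R M S h" "\<And>x. x \<in> carrier M \<Longrightarrow> h x \<in> next_socle R S"
  shows "rhom R M (layer R S) (\<lambda>x. S +> h x)"
proof -
  note hD = rhom_moduloD[OF h(1)]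
  have "S +> h (x \<oplus>\<^bsub>M\<^esub> y) = (S +> h x) <+> (S +> h y)" if "x \<in> carrier M" "y \<in> carrier M" for x y
    using right_ideal_coset_eq_iff[OF S] right_ideal_coset_add[OF S] hD that by simp
  moreover have "S +> h (ract M x r) = (\<lambda>z. z \<otimes> r) ` (S +> h x) <+> S"
    if "x \<in> carrier M" "r \<in> carrier R" for x r
    using right_ideal_coset_eq_iff[OF S] right_ideal_coset_mult[OF S] hD that by (simp add: ract_closed)
  ultimately show ?thesis
    unfolding rhom_def layer_def using h(2) by auto
qed

lemma rhom_modulo_coefficient:
  assumes V: "rsubmodule R M V" and b: "b \<in> carrier M" and \<tau>: "rhom R M M \<tau>"
    and \<phi>: "\<phi> \<in> carrier M \<rightarrow> carrier R" "\<And>x. x \<in> carrier M \<Longrightarrow> \<tau> x \<ominus>\<^bsub>M\<^esub> ract M b (\<phi> x) \<in> V"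
  shows "rhom_modulo R M {r \<in> carrier R. ract M b r \<in> V} \<phi>"
proof -
  note \<tau>D = rhomD[OF \<tau>]
  have \<phi>c: "\<And>x. x \<in> carrier M \<Longrightarrow> \<phi> x \<in> carrier R" using \<phi>(1) by blast
  have coset: "V +>\<^bsub>M\<^esub> \<tau> x = V +>\<^bsub>M\<^esub> ract M b (\<phi> x)" if "x \<in> carrier M" for x
    using coset_eq_iff[OF V] \<phi>(2) that \<tau>D(1) \<phi>c b by (simp add: ract_closed)
  have in_V: "ract M b (r1 \<ominus> r2) \<in> V"
    if "r1 \<in> carrier R" "r2 \<in> carrier R" "V +>\<^bsub>M\<^esub> ract M b r1 = V +>\<^bsub>M\<^esub> ract M b r2" for r1 r2
    using that coset_eq_iff[OF V] b by (simp add: ract_closed ract_minus_right)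
  have "\<phi> (x \<oplus>\<^bsub>M\<^esub> y) \<ominus> (\<phi> x \<oplus> \<phi> y) \<in> {r \<in> carrier R. ract M b r \<in> V}"
    if xy: "x \<in> carrier M" "y \<in> carrier M" for x y
  proof -
    have "V +>\<^bsub>M\<^esub> ract M b (\<phi> (x \<oplus>\<^bsub>M\<^esub> y)) = (V +>\<^bsub>M\<^esub> \<tau> x) <+>\<^bsub>M\<^esub> (V +>\<^bsub>M\<^esub> \<tau> y)"
      using coset[of "x \<oplus>\<^bsub>M\<^esub> y"] coset_add[OF V] xy \<tau>D by simp
    also have "\<dots> = V +>\<^bsub>M\<^esub> ract M b (\<phi> x \<oplus> \<phi> y)"
      using coset coset_add[OF V] xy b \<phi>c by (simp add: ract_closed ract_add_right)
    finally show ?thesis using in_V[of "\<phi> (x \<oplus>\<^bsub>M\<^esub> y)" "\<phi> x \<oplus> \<phi> y"] xy \<phi>c by simp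
  qed
  moreover have "\<phi> (ract M x r) \<ominus> \<phi> x \<otimes> r \<in> {r \<in> carrier R. ract M b r \<in> V}"
    if xr: "x \<in> carrier M" "r \<in> carrier R" for x r
  proof -
    have "V +>\<^bsub>M\<^esub> ract M b (\<phi> (ract M x r)) = ract (quot_mod M V) (V +>\<^bsub>M\<^esub> \<tau> x) r"
      using coset[of "ract M x r"] coset_ract[OF V] xr \<tau>D by (simp add: ract_closed)
    also have "\<dots> = V +>\<^bsub>M\<^esub> ract M b (\<phi> x \<otimes> r)"
      using coset coset_ract[OF V] xr b \<phi>c by (simp add: ract_closed ract_mult)
    finally show ?thesis using in_V[of "\<phi> (ract M x r)" "\<phi> x \<otimes> r"] xr \<phi>c by (simp add: ract_closed)
  qed
  ultimately show ?thesis unfolding rhom_modulo_def using \<phi>(1) by blast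
qed

end

section \<open>Lifting along the socle sequence\<close>

definition lifts_into :: "'a ring \<Rightarrow> ('a, 'b) module \<Rightarrow> 'a set \<Rightarrow> bool" where
  "lifts_into R M S \<longleftrightarrow> (\<forall>I \<phi>. right_ideal R I \<longrightarrow> rhom_modulo R M I \<phi> \<longrightarrow>
     (\<forall>x\<in>carrier M. \<phi> x \<in> S <+>\<^bsub>R\<^esub> I) \<longrightarrow>
     (\<exists>u. rhom R M (RR R) u \<and> (\<forall>x\<in>carrier M. u x \<ominus>\<^bsub>R\<^esub> \<phi> x \<in> I)))"

context rmodule
begin

lemma lifts_into_zero: "lifts_into R M {\<zero>}"
  unfolding lifts_into_def
proof (intro allI impI)
  fix I \<phi> assume I: "right_ideal R I" and "\<forall>x\<in>carrier M. \<phi> x \<in> {\<zero>} <+> I"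
  then have \<phi>I: "\<And>x. x \<in> carrier M \<Longrightarrow> \<phi> x \<in> I"
    using right_idealD(1)[OF I] by (fastforce simp: mem_set_add_iff)
  have "\<zero> \<ominus> \<phi> x \<in> I" if "x \<in> carrier M" for x
    using right_idealD(4)[OF I \<phi>I[OF that]] \<phi>I[OF that] right_idealD(1)[OF I] by (auto simp: minus_eq)
  moreover have "rhom R M (RR R) (\<lambda>x. \<zero>)" unfolding rhom_def by auto
  ultimately show "\<exists>u. rhom R M (RR R) u \<and> (\<forall>x\<in>carrier M. u x \<ominus> \<phi> x \<in> I)" by blast
qed

lemma split_through_next_socle:
  assumes S: "right_ideal R S" and I: "right_ideal R I"
    and \<phi>: "rhom_modulo R M I \<phi>" "\<And>x. x \<in> carrier M \<Longrightarrow> \<phi> x \<in> next_socle R S <+> I"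
  obtains h where "rhom_modulo R M S h" "\<And>x. x \<in> carrier M \<Longrightarrow> h x \<in> next_socle R S"
    "\<And>x. x \<in> carrier M \<Longrightarrow> \<phi> x \<ominus> h x \<in> S <+> I"
proof -
  let ?S' = "next_socle R S" and ?SI = "S <+> I"
  have SI: "right_ideal R ?SI" by (rule right_ideal_set_add[OF S I])
  have S'_SI: "right_ideal R (?S' \<inter> ?SI)" by (rule right_ideal_Int[OF right_ideal_next_socle[OF S] SI])
  obtain Y where Y: "right_ideal R Y" "S \<subseteq> Y" "Y \<subseteq> ?S'" "Y \<inter> (?S' \<inter> ?SI) \<subseteq> S"
    "?S' \<subseteq> Y <+> (?S' \<inter> ?SI)"
    by (rule right_ideal_complement_in_next_socle[OF S S'_SI])
  have "\<forall>x\<in>carrier M. \<exists>y. y \<in> Y \<and> \<phi> x \<ominus> y \<in> ?SI"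
  proof
    fix x assume x: "x \<in> carrier M"
    obtain s i where si: "s \<in> ?S'" "i \<in> I" "\<phi> x = s \<oplus> i"
      using \<phi>(2)[OF x] by (auto simp: mem_set_add_iff)
    have "s \<in> Y <+> (?S' \<inter> ?SI)" using Y(5) si(1) by blast
    then obtain y z where yz: "y \<in> Y" "z \<in> ?S' \<inter> ?SI" "s = y \<oplus> z"
      unfolding mem_set_add_iff by blast
    have "y \<in> carrier R" "z \<in> carrier R" "i \<in> carrier R"
      using yz si right_idealD(1) Y(1) S'_SI I by auto
    then have "\<phi> x \<ominus> y = z \<oplus> i" using si(3) yz(3) by simp algebra
    moreover have "z \<oplus> i \<in> ?SI"
      using right_idealD(3)[OF SI] yz(2) set_add_subset_right[OF S right_idealD(1)[OF I]] si(2) by blast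
    ultimately show "\<exists>y. y \<in> Y \<and> \<phi> x \<ominus> y \<in> ?SI" using yz(1) by (intro exI[of _ y]) simp
  qed
  then obtain h where h: "\<forall>x\<in>carrier M. h x \<in> Y \<and> \<phi> x \<ominus> h x \<in> ?SI"
    by (rule bchoice[elim_format]) blast
  have hc: "h \<in> carrier M \<rightarrow> carrier R" using h right_idealD(1)[OF Y(1)] by blast
  have "rhom_modulo R M (Y \<inter> ?SI) h"
  proof (rule rhom_modulo_Int)
    show "rhom_modulo R M Y h" using h by (intro rhom_modulo_of_values_in[OF Y(1)]) blast
    show "rhom_modulo R M ?SI h"
    proof (rule rhom_modulo_cong[OF SI _ hc])
      show "rhom_modulo R M ?SI \<phi>"
        by (rule rhom_modulo_mono[OF set_add_subset_right[OF S right_idealD(1)[OF I]] \<phi>(1)])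
      show "\<And>x. x \<in> carrier M \<Longrightarrow> \<phi> x \<ominus> h x \<in> ?SI" using h by blast
    qed
  qed
  then have "rhom_modulo R M S h" by (rule rhom_modulo_mono[rotated]) (use Y(3,4) in blast)
  then show thesis using h Y(3) by (intro that) auto
qed

end

locale fin_gen_weakly_projective = rmodule +
  assumes fin_gen_M: "fin_gen R M"
    and weakly_projective_M: "weakly_projective R M"
begin

lemma lift_through_layer:
  assumes S: "S \<in> socle_seq R" "S \<noteq> carrier R"
    and h: "rhom_modulo R M S h" "\<And>x. x \<in> carrier M \<Longrightarrow> h x \<in> next_socle R S"
  obtains g where "rhom R M (RR R) g" "\<And>x. x \<in> carrier M \<Longrightarrow> g x \<ominus> h x \<in> S"
proof (cases "S = {\<zero>}")
  case True
  then show thesis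
    using that rhom_of_rhom_modulo_zero h(1)
      right_ideal_diff_refl[OF right_ideal_socle_seq[OF S(1)] rhom_moduloD(1)[OF h(1)]] by auto
next
  case False
  have ideal_S: "right_ideal R S" by (rule right_ideal_socle_seq[OF S(1)])
  let ?F = "\<lambda>x. S +> h x" and ?L = "layer R S"
  have L: "right_module R ?L" by (rule right_module_layer[OF ideal_S])
  have F: "rhom R M ?L ?F" by (rule rhom_layer[OF ideal_S h])
  have "rsubmodule R ?L (?F ` carrier M)" by (rule rsubmodule_image[OF L F rsubmodule_carrier])
  then have fg: "fin_gen R (submod ?L (?F ` carrier M))"
    using F rmodule.right_module_submod[OF rmoduleI[OF L]]
    by (intro fin_gen_image[OF _ _ _ fin_gen_M]) (auto simp: rhom_def)
  obtain g where g: "rhom R M (submod (RR R) (next_socle R S)) g"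
    and Fg: "\<forall>x\<in>carrier M. ?F x = S +>\<^bsub>RR R\<^esub> g x"
    using weakly_projective_M[unfolded weakly_projective_def, rule_format, OF S(1) False S(2) conjI[OF F fg]]
    by blast
  have gS': "\<And>x. x \<in> carrier M \<Longrightarrow> g x \<in> next_socle R S" using rhomD(1)[OF g] by simp
  then have gc: "\<And>x. x \<in> carrier M \<Longrightarrow> g x \<in> carrier R"
    using right_idealD(1)[OF right_ideal_next_socle[OF ideal_S]] by blast
  show thesis
  proof
    show "rhom R M (RR R) g" using g gc unfolding rhom_def by auto
  next
    fix x assume x: "x \<in> carrier M"
    then have "h x \<ominus> g x \<in> S"
      using Fg right_ideal_coset_eq_iff[OF ideal_S rhom_moduloD(1)[OF h(1) x] gc[OF x]] by simp
    then show "g x \<ominus> h x \<in> S"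
      using right_ideal_diff_sym[OF ideal_S rhom_moduloD(1)[OF h(1) x] gc[OF x]] by blast
  qed
qed

lemma lifts_into_next_socle:
  assumes S: "S \<in> socle_seq R" and IH: "lifts_into R M S"
  shows "lifts_into R M (next_socle R S)"
  unfolding lifts_into_def
proof (intro allI impI)
  fix I \<phi> assume I: "right_ideal R I" and \<phi>: "rhom_modulo R M I \<phi>"
    and \<phi>S': "\<forall>x\<in>carrier M. \<phi> x \<in> next_socle R S <+> I"
  have ideal_S: "right_ideal R S" by (rule right_ideal_socle_seq[OF S])
  show "\<exists>u. rhom R M (RR R) u \<and> (\<forall>x\<in>carrier M. u x \<ominus> \<phi> x \<in> I)"
  proof (cases "S = carrier R")
    case True
    then have "next_socle R S = S"
      using subset_next_socle[OF ideal_S] right_idealD(1)[OF right_ideal_next_socle[OF ideal_S]] by blast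
    then show ?thesis using IH I \<phi> \<phi>S' unfolding lifts_into_def by simp
  next
    case False
    obtain h where h: "rhom_modulo R M S h" "\<And>x. x \<in> carrier M \<Longrightarrow> h x \<in> next_socle R S"
      "\<And>x. x \<in> carrier M \<Longrightarrow> \<phi> x \<ominus> h x \<in> S <+> I"
      using split_through_next_socle[OF ideal_S I \<phi>] \<phi>S' by blast
    have hc: "\<And>x. x \<in> carrier M \<Longrightarrow> h x \<in> carrier R" using rhom_moduloD(1)[OF h(1)] .
    obtain g where g: "rhom R M (RR R) g" "\<And>x. x \<in> carrier M \<Longrightarrow> g x \<ominus> h x \<in> S"
      using lift_through_layer[OF S False h(1,2)] by blast
    have gc: "\<And>x. x \<in> carrier M \<Longrightarrow> g x \<in> carrier R" using rhomD(1)[OF g(1)] by simp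
    let ?\<psi> = "\<lambda>x. \<phi> x \<ominus> g x"
    have "?\<psi> x \<in> S <+> I" if x: "x \<in> carrier M" for x
    proof -
      have "?\<psi> x = (\<phi> x \<ominus> h x) \<oplus> (h x \<ominus> g x)"
        using rhom_moduloD(1)[OF \<phi> x] hc[OF x] gc[OF x] by algebra
      moreover have "h x \<ominus> g x \<in> S <+> I"
        using right_ideal_diff_sym[OF ideal_S gc[OF x] hc[OF x] g(2)[OF x]]
          set_add_subset_left[OF I right_idealD(1)[OF ideal_S]] by blast
      ultimately show ?thesis
        using right_idealD(3)[OF right_ideal_set_add[OF ideal_S I] h(3)[OF x]] by simp
    qed
    then obtain u where u: "rhom R M (RR R) u" "\<And>x. x \<in> carrier M \<Longrightarrow> u x \<ominus> ?\<psi> x \<in> I"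
      using IH I rhom_modulo_diff[OF \<phi> g(1)] unfolding lifts_into_def by blast
    have "(g x \<oplus> u x) \<ominus> \<phi> x = u x \<ominus> ?\<psi> x" if "x \<in> carrier M" for x
      using rhom_moduloD(1)[OF \<phi> that] gc[OF that] rhomD(1)[OF u(1) that] by simp algebra
    then show ?thesis using rhom_add[OF RR.rmod g(1) u(1)] u(2) by auto
  qed
qed

lemma lifts_into_Union:
  assumes C: "C \<noteq> {}" "C \<subseteq> socle_seq R" and IH: "\<And>S. S \<in> C \<Longrightarrow> lifts_into R M S"
  shows "lifts_into R M (\<Union>C)"
  unfolding lifts_into_def
proof (intro allI impI)
  fix I \<phi> assume I: "right_ideal R I" and \<phi>: "rhom_modulo R M I \<phi>"
    and \<phi>C: "\<forall>x\<in>carrier M. \<phi> x \<in> \<Union>C <+> I"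
  obtain A where A: "finite A" "A \<subseteq> carrier M" "carrier M \<subseteq> rspan R M A"
    using fin_gen_M unfolding fin_gen_iff_rspan by blast
  have "\<forall>a\<in>A. \<exists>s. s \<in> \<Union>C \<and> (\<exists>i\<in>I. \<phi> a = s \<oplus> i)"
    using \<phi>C A(2) unfolding mem_set_add_iff by blast
  then obtain s where s: "\<forall>a\<in>A. s a \<in> \<Union>C \<and> (\<exists>i\<in>I. \<phi> a = s a \<oplus> i)"
    by (rule bchoice[elim_format]) blast
  obtain J where J: "J \<in> C" "s ` A \<subseteq> J"
  proof (rule finite_subset_Union_chain[of "s ` A" C C])
    show "subset.chain C C" using C(2) socle_seq_total by (auto simp: subset_chain_def)
  qed (use A(1) s C(1) in auto)
  have ideal_J: "right_ideal R J" using J(1) C(2) right_ideal_socle_seq by blast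
  have "\<phi> a \<in> J <+> I" if "a \<in> A" for a
    using s J(2) that unfolding mem_set_add_iff by blast
  then have "\<phi> x \<in> J <+> I" if "x \<in> carrier M" for x
    using rhom_modulo_values_rspan[OF right_ideal_set_add[OF ideal_J I] I _ \<phi> A(1,2)] that A(3)
      set_add_subset_right[OF ideal_J right_idealD(1)[OF I]] by blast
  then show "\<exists>u. rhom R M (RR R) u \<and> (\<forall>x\<in>carrier M. u x \<ominus> \<phi> x \<in> I)"
    using IH[OF J(1)] I \<phi> unfolding lifts_into_def by blast
qed

lemma lifts_into_socle_seq: "S \<in> socle_seq R \<Longrightarrow> lifts_into R M S"
proof (induction rule: socle_seq.induct)
  case zero
  then show ?case by (rule lifts_into_zero)
next
  case (succ I)
  then show ?case by (rule lifts_into_next_socle)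
next
  case (lim C)
  then show ?case by (intro lifts_into_Union) blast+
qed

lemma lift_modulo_right_ideal:
  assumes sa: "right_semiartinian R" and I: "right_ideal R I" and \<phi>: "rhom_modulo R M I \<phi>"
  shows "\<exists>u. rhom R M (RR R) u \<and> (\<forall>x\<in>carrier M. u x \<ominus> \<phi> x \<in> I)"
proof -
  have "\<forall>x\<in>carrier M. \<phi> x \<in> carrier R <+> I"
    using rhom_moduloD(1)[OF \<phi>] set_add_subset_left[OF I subset_refl] by blast
  then show ?thesis
    using lifts_into_socle_seq[OF carrier_in_socle_seq[OF sa]] I \<phi> unfolding lifts_into_def by blast
qed

end

section \<open>Dual bases and projectivity\<close>

context rmodule
begin

lemma rprojective_of_dual_basis:
  assumes A: "finite A" "A \<subseteq> carrier M"
    and s: "\<And>a. a \<in> A \<Longrightarrow> rhom R M (RR R) (s a)"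
    and dual: "\<And>x. x \<in> carrier M \<Longrightarrow> x = (\<Oplus>\<^bsub>M\<^esub>a\<in>A. ract M a (s a x))"
  shows "rprojective R M TYPE('d) TYPE('e)"
  unfolding rprojective_def
proof (intro allI impI, elim conjE)
  fix N :: "('a, 'd) module" and N' :: "('a, 'e) module" and p f
  assume N: "right_module R N" and N': "right_module R N'" and p: "rhom R N N' p"
    and p_onto: "p ` carrier N = carrier N'" and f: "rhom R M N' f"
  interpret N: rmodule R N by (rule rmoduleI[OF N])
  interpret N': rmodule R N' by (rule rmoduleI[OF N'])
  have sc: "\<And>a x. a \<in> A \<Longrightarrow> x \<in> carrier M \<Longrightarrow> s a x \<in> carrier R"
    using rhomD(1)[OF s] by simp
  have "\<forall>a\<in>A. \<exists>m. m \<in> carrier N \<and> p m = f a"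
  proof
    fix a assume "a \<in> A"
    then have "f a \<in> p ` carrier N" using p_onto rhomD(1)[OF f] A(2) by auto
    then show "\<exists>m. m \<in> carrier N \<and> p m = f a" by auto
  qed
  then obtain n where n: "\<forall>a\<in>A. n a \<in> carrier N \<and> p (n a) = f a"
    by (rule bchoice[elim_format]) blast
  define g where "g x = (\<Oplus>\<^bsub>N\<^esub>a\<in>A. ract N (n a) (s a x))" for x
  have "rhom R M N g"
    unfolding g_def
    using n s by (intro rhom_finsum_fun[OF N A(1)] rhom_comp[OF _ N.rhom_ract_left]) auto
  moreover have "p (g x) = f x" if x: "x \<in> carrier M" for x
  proof -
    have terms: "(\<lambda>a. ract N (n a) (s a x)) \<in> A \<rightarrow> carrier N" "(\<lambda>a. ract M a (s a x)) \<in> A \<rightarrow> carrier M"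
      using n sc x A(2) by (auto intro!: N.ract_closed ract_closed)
    have "p (g x) = (\<Oplus>\<^bsub>N'\<^esub>a\<in>A. p (ract N (n a) (s a x)))"
      unfolding g_def by (rule N.rhom_finsum[OF N' p A(1) terms(1)])
    also have "\<dots> = (\<Oplus>\<^bsub>N'\<^esub>a\<in>A. f (ract M a (s a x)))"
      using n sc x A(2) rhomD[OF p] rhomD[OF f]
      by (intro N'.M.finsum_cong') (auto simp: subset_iff intro!: rhomD(1)[OF f] ract_closed)
    also have "\<dots> = f (\<Oplus>\<^bsub>M\<^esub>a\<in>A. ract M a (s a x))"
      by (rule rhom_finsum[OF N' f A(1) terms(2), symmetric])
    finally show ?thesis using dual[OF x] by simp
  qed
  ultimately show "\<exists>g. rhom R M N g \<and> (\<forall>x\<in>carrier M. p (g x) = f x)" by blast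
qed

end

context fin_gen_weakly_projective
begin

lemma dual_basis_step:
  assumes sa: "right_semiartinian R" and B: "finite B" "B \<subseteq> carrier M" and b: "b \<in> carrier M" "b \<notin> B"
    and \<tau>: "rhom R M M \<tau>" "\<forall>x\<in>carrier M. \<tau> x \<in> rspan R M (insert b B)"
  shows "\<exists>u. rhom R M (RR R) u \<and> (\<forall>x\<in>carrier M. \<tau> x \<ominus>\<^bsub>M\<^esub> ract M b (u x) \<in> rspan R M B)"
proof -
  note \<tau>c = rhomD(1)[OF \<tau>(1)]
  let ?V = "rspan R M B"
  let ?Ib = "{r \<in> carrier R. ract M b r \<in> ?V}"
  have V: "rsubmodule R M ?V" by (rule rsubmodule_rspan[OF B])
  have Ib: "right_ideal R ?Ib"
    using RR.rsubmodule_vimage[OF rmod rhom_ract_left[OF b(1)] V] by (simp add: right_ideal_def)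
  have "\<forall>x\<in>carrier M. \<exists>r. r \<in> carrier R \<and> \<tau> x \<ominus>\<^bsub>M\<^esub> ract M b r \<in> ?V"
    using rspan_insert[OF B b(2,1)] \<tau>(2) by blast
  then obtain \<phi> where \<phi>: "\<forall>x\<in>carrier M. \<phi> x \<in> carrier R \<and> \<tau> x \<ominus>\<^bsub>M\<^esub> ract M b (\<phi> x) \<in> ?V"
    by (rule bchoice[elim_format]) blast
  have "rhom_modulo R M ?Ib \<phi>" by (rule rhom_modulo_coefficient[OF V b(1) \<tau>(1)]) (use \<phi> in auto)
  then obtain u where u: "rhom R M (RR R) u" "\<forall>x\<in>carrier M. u x \<ominus> \<phi> x \<in> ?Ib"
    using lift_modulo_right_ideal[OF sa Ib] by blast
  have uc: "\<And>x. x \<in> carrier M \<Longrightarrow> u x \<in> carrier R" using rhomD(1)[OF u(1)] by simp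
  have "\<tau> x \<ominus>\<^bsub>M\<^esub> ract M b (u x) \<in> ?V" if x: "x \<in> carrier M" for x
  proof -
    have "\<phi> x \<ominus> u x \<in> ?Ib" using right_ideal_diff_sym[OF Ib uc[OF x]] u(2) x \<phi> by blast
    then have "ract M b (\<phi> x) \<ominus>\<^bsub>M\<^esub> ract M b (u x) \<in> ?V"
      using b uc[OF x] \<phi> x by (simp add: ract_minus_right)
    then have "?V +>\<^bsub>M\<^esub> ract M b (\<phi> x) = ?V +>\<^bsub>M\<^esub> ract M b (u x)"
      using coset_eq_iff[OF V] b uc[OF x] \<phi> x by (simp add: ract_closed)
    moreover have "?V +>\<^bsub>M\<^esub> \<tau> x = ?V +>\<^bsub>M\<^esub> ract M b (\<phi> x)"
      using coset_eq_iff[OF V] \<phi> x b \<tau>c by (simp add: ract_closed)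
    ultimately show ?thesis
      using coset_eq_iff[OF V] x \<tau>c b uc by (simp add: ract_closed)
  qed
  then show ?thesis using u(1) by blast
qed

lemma dual_basis_rspan:
  assumes sa: "right_semiartinian R"
  shows "finite B \<Longrightarrow> B \<subseteq> carrier M \<Longrightarrow> rhom R M M \<tau> \<Longrightarrow> \<forall>x\<in>carrier M. \<tau> x \<in> rspan R M B \<Longrightarrow>
    \<exists>s. (\<forall>b\<in>B. rhom R M (RR R) (s b)) \<and> (\<forall>x\<in>carrier M. \<tau> x = (\<Oplus>\<^bsub>M\<^esub>b\<in>B. ract M b (s b x)))"
proof (induction B arbitrary: \<tau> rule: finite_induct)
  case empty
  then have "\<forall>x\<in>carrier M. \<tau> x = \<zero>\<^bsub>M\<^esub>" by (simp add: rspan_def)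
  then show ?case by (intro exI[of _ "\<lambda>b x. \<zero>"]) simp
next
  case (insert b B)
  have b: "b \<in> carrier M" and B: "B \<subseteq> carrier M" using insert.prems(1) by auto
  obtain u where u: "rhom R M (RR R) u" "\<forall>x\<in>carrier M. \<tau> x \<ominus>\<^bsub>M\<^esub> ract M b (u x) \<in> rspan R M B"
    using dual_basis_step[OF sa insert.hyps(1) B b insert.hyps(2) insert.prems(2,3)] by blast
  have uc: "\<And>x. x \<in> carrier M \<Longrightarrow> u x \<in> carrier R" using rhomD(1)[OF u(1)] by simp
  let ?\<tau>' = "\<lambda>x. \<tau> x \<ominus>\<^bsub>M\<^esub> ract M b (u x)"
  have "rhom R M M ?\<tau>'"
    by (rule rhom_diff[OF insert.prems(2) rhom_comp[OF u(1) rhom_ract_left[OF b]]])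
  then obtain s' where s': "\<forall>c\<in>B. rhom R M (RR R) (s' c)"
    "\<forall>x\<in>carrier M. ?\<tau>' x = (\<Oplus>\<^bsub>M\<^esub>c\<in>B. ract M c (s' c x))"
    using insert.IH[OF B] u(2) by blast
  define s where "s = s'(b := u)"
  have "\<tau> x = (\<Oplus>\<^bsub>M\<^esub>c\<in>insert b B. ract M c (s c x))" if x: "x \<in> carrier M" for x
  proof -
    have s'c: "\<And>c. c \<in> B \<Longrightarrow> s' c x \<in> carrier R" using rhomD(1)[OF bspec[OF s'(1)] x] by simp
    have f: "(\<lambda>c. ract M c (s c x)) \<in> B \<rightarrow> carrier M"
      using s'c B insert.hyps(2) by (auto simp: s_def intro!: ract_closed)
    have "(\<Oplus>\<^bsub>M\<^esub>c\<in>B. ract M c (s c x)) = (\<Oplus>\<^bsub>M\<^esub>c\<in>B. ract M c (s' c x))"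
      using s'c B insert.hyps(2) by (intro M.finsum_cong') (auto simp: s_def intro!: ract_closed)
    then have "(\<Oplus>\<^bsub>M\<^esub>c\<in>insert b B. ract M c (s c x)) = ract M b (u x) \<oplus>\<^bsub>M\<^esub> ?\<tau>' x"
      using M.finsum_insert[OF insert.hyps f] s'(2) x b uc by (simp add: s_def ract_closed)
    also have "\<dots> = \<tau> x"
      using rhomD(1)[OF insert.prems(2) x] ract_closed[OF b uc[OF x]]
      by (simp add: M.minus_eq M.a_lcomm[of "ract M b (u x)"] M.r_neg)
    finally show ?thesis by simp
  qed
  moreover have "\<forall>c\<in>insert b B. rhom R M (RR R) (s c)" using s'(1) u(1) by (auto simp: s_def)
  ultimately show ?case by blast
qed

lemma rprojective:
  assumes "right_semiartinian R"
  shows "rprojective R M TYPE('d) TYPE('e)"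
proof -
  obtain A where A: "finite A" "A \<subseteq> carrier M" and "\<forall>x\<in>carrier M. x \<in> rspan R M A"
    using fin_gen_M unfolding fin_gen_iff_rspan by blast
  moreover have "rhom R M M (\<lambda>x. x)" unfolding rhom_def by (simp add: ract_closed)
  ultimately obtain s where "\<forall>a\<in>A. rhom R M (RR R) (s a)"
    "\<forall>x\<in>carrier M. x = (\<Oplus>\<^bsub>M\<^esub>a\<in>A. ract M a (s a x))"
    using dual_basis_rspan[OF assms A] by blast
  then show ?thesis using rprojective_of_dual_basis[OF A] by blast
qed

end

theorem corollary1p6:
  fixes R :: "'a ring" and M :: "('a, 'b) module"
  assumes "right_semiartinian R"
    and "\<not> completely_reducible R"
    and "right_module R M"
    and "fin_gen R M"
    and "weakly_projective R M"
  shows "rprojective R M TYPE('d) TYPE('e)"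
proof -
  interpret fin_gen_weakly_projective R M
    using assms(3-5)
    by (simp add: fin_gen_weakly_projective_def fin_gen_weakly_projective_axioms_def rmoduleI)
  show ?thesis by (rule rprojective[OF assms(1)])
qed

end
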